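(* Let $\mathcal{M}=(E,\rho)$ be a $q$-matroid with $\dim E\ge 2$. The following are equivalent: (i) $\mathcal{M}$ is irreducible; (ii) $\mathcal{M}$ is full and there do not exist nonzero subspaces $Z_1,Z_2\in\mathcal{Z}(\mathcal{M})$ such that $E=Z_1\oplus Z_2$ (i.e. $Z_1+Z_2=E$ and $Z_1\cap Z_2=0$), $\rho(Z_1)+\rho(Z_2)=\rho(E)$, and $\{Y_1\oplus Y_2\mid Y_1\in\mathcal{Z}_1,\ Y_2\in\mathcal{Z}_2\}=\mathcal{Z}(\mathcal{M})$, where $\mathcal{Z}_i=\{Z\in\mathcal{Z}(\mathcal{M})\mid Z\le Z_i\}$.
   Context: Let $\mathbb{F}=\mathbb{F}_q$. For a finite-dimensional $\mathbb{F}$-vector space $E$, $\mathcal{L}(E)$ is its subspace lattice. A $q$-matroid is $\mathcal{M}=(E,\rho)$ with $\rho:\mathcal{L}(E)\to\mathbb{Z}_{\ge0}$ satisfying $0\le\rho(V)\le\dim V$, monotonicity, and submodularity $\rho(V+W)+\rho(V\cap W)\le\rho(V)+\rho(W)$. A flat is $F$ with $\rho(F+\langle x\rangle)>\rho(F)$ for all $x\notin F$. The closure is $\mathrm{cl}(V)=\sum\{\langle x\rangle : x\in E,\ \rho(V+\langle x\rangle)=\rho(V)\}$. The cyclic core is $\mathrm{cyc}(V)=\{x\in V\mid\rho(W)=\rho(V)\text{ for all }W\le V\text{ with }W+\langle x\rangle=V\}$; $V$ is cyclic if $\mathrm{cyc}(V)=V$; $\mathcal{Z}(\mathcal{M})$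 is the set of cyclic flats. $\mathcal{M}$ is full if $\mathrm{cl}(0)=0$ and $\mathrm{cyc}(E)=E$. Direct sum: for $q$-matroids $\mathcal{M}_i=(E_i,\rho_i)$ and $E=E_1\oplus E_2$ with projections $\pi_i$, $\mathcal{M}_1\oplus\mathcal{M}_2=(E,\rho)$ with $\rho(V)=\dim V+\min_{X\le V}(\rho_1(\pi_1(X))+\rho_2(\pi_2(X))-\dim X)$; we write $\mathcal{M}=\mathcal{M}_1\oplus\mathcal{M}_2$ when $E$ is the internal direct sum of subspaces $E_1,E_2$ and the rank function of $\mathcal{M}$ equals this one. $\mathcal{M}$ is reducible if $\mathcal{M}=\mathcal{M}_1\oplus\mathcal{M}_2$ for some $q$-matroids $\mathcal{M}_1,\mathcal{M}_2$ with nonzero ground spaces, and irreducible otherwise. *)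

theory Defs
  imports "HOL-Analysis.Cartesian_Space"
begin

text \<open>Ambient space: 'a^'n with 'a a finite field (F_q, q = CARD('a)).
 A q-matroid is given by a ground subspace E of the ambient space and a rank
 function rho on the subspaces of E.\<close>

type_synonym ('a, 'n) vsp = "('a ^ 'n) set"

definition subspaces :: "('a::{field,finite}, 'n::finite) vsp \<Rightarrow> ('a, 'n) vsp set" where
  "subspaces E = {V. vec.subspace V \<and> V \<subseteq> E}"

definition ssum :: "('a::{field,finite}, 'n::finite) vsp \<Rightarrow> ('a, 'n) vsp \<Rightarrow> ('a, 'n) vsp" where
  "ssum V W = {v + w | v w. v \<in> V \<and> w \<in> W}"

definition qmatroid :: "('a::{field,finite}, 'n::finite) vsp \<Rightarrow> (('a, 'n) vsp \<Rightarrow> nat) \<Rightarrow> bool" where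
  "qmatroid E \<rho> \<longleftrightarrow> vec.subspace E
     \<and> (\<forall>V \<in> subspaces E. \<rho> V \<le> vec.dim V)
     \<and> (\<forall>V \<in> subspaces E. \<forall>W \<in> subspaces E. V \<subseteq> W \<longrightarrow> \<rho> V \<le> \<rho> W)
     \<and> (\<forall>V \<in> subspaces E. \<forall>W \<in> subspaces E.
           \<rho> (ssum V W) + \<rho> (V \<inter> W) \<le> \<rho> V + \<rho> W)"

definition flat :: "('a::{field,finite}, 'n::finite) vsp \<Rightarrow> (('a, 'n) vsp \<Rightarrow> nat) \<Rightarrow> ('a, 'n) vsp \<Rightarrow> bool" where
  "flat E \<rho> F \<longleftrightarrow> F \<in> subspaces E \<and>
     (\<forall>x \<in> E - F. \<rho> (ssum F (vec.span {x})) > \<rho> F)"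

definition qclosure :: "('a::{field,finite}, 'n::finite) vsp \<Rightarrow> (('a, 'n) vsp \<Rightarrow> nat) \<Rightarrow> ('a, 'n) vsp \<Rightarrow> ('a, 'n) vsp" where
  "qclosure E \<rho> V = vec.span {x \<in> E. \<rho> (ssum V (vec.span {x})) = \<rho> V}"

definition cyc :: "(('a::{field,finite}, 'n::finite) vsp \<Rightarrow> nat) \<Rightarrow> ('a, 'n) vsp \<Rightarrow> ('a, 'n) vsp" where
  "cyc \<rho> V = {x \<in> V. \<forall>W \<in> subspaces V. ssum W (vec.span {x}) = V \<longrightarrow> \<rho> W = \<rho> V}"

definition cyclic :: "(('a::{field,finite}, 'n::finite) vsp \<Rightarrow> nat) \<Rightarrow> ('a, 'n) vsp \<Rightarrow> bool" where
  "cyclic \<rho> V \<longleftrightarrow> cyc \<rho> V = V"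

definition cyclic_flats :: "('a::{field,finite}, 'n::finite) vsp \<Rightarrow> (('a, 'n) vsp \<Rightarrow> nat) \<Rightarrow> ('a, 'n) vsp set" where
  "cyclic_flats E \<rho> = {Z. flat E \<rho> Z \<and> cyclic \<rho> Z}"

definition full :: "('a::{field,finite}, 'n::finite) vsp \<Rightarrow> (('a, 'n) vsp \<Rightarrow> nat) \<Rightarrow> bool" where
  "full E \<rho> \<longleftrightarrow> qclosure E \<rho> {0} = {0} \<and> cyc \<rho> E = E"

definition internal_dsum :: "('a::{field,finite}, 'n::finite) vsp \<Rightarrow> ('a, 'n) vsp \<Rightarrow> ('a, 'n) vsp \<Rightarrow> bool" where
  "internal_dsum E E1 E2 \<longleftrightarrow> vec.subspace E1 \<and> vec.subspace E2 \<and>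
     ssum E1 E2 = E \<and> E1 \<inter> E2 = {0}"

definition proj1 :: "('a::{field,finite}, 'n::finite) vsp \<Rightarrow> ('a, 'n) vsp \<Rightarrow> 'a ^ 'n \<Rightarrow> 'a ^ 'n" where
  "proj1 E1 E2 x = (THE e. e \<in> E1 \<and> x - e \<in> E2)"

definition proj2 :: "('a::{field,finite}, 'n::finite) vsp \<Rightarrow> ('a, 'n) vsp \<Rightarrow> 'a ^ 'n \<Rightarrow> 'a ^ 'n" where
  "proj2 E1 E2 x = (THE e. e \<in> E2 \<and> x - e \<in> E1)"

definition dsum_rank :: "('a::{field,finite}, 'n::finite) vsp \<Rightarrow> (('a, 'n) vsp \<Rightarrow> nat)
     \<Rightarrow> ('a, 'n) vsp \<Rightarrow> (('a, 'n) vsp \<Rightarrow> nat) \<Rightarrow> ('a, 'n) vsp \<Rightarrow> int" where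
  "dsum_rank E1 \<rho>1 E2 \<rho>2 V = int (vec.dim V) +
     Min {int (\<rho>1 (proj1 E1 E2 ` X)) + int (\<rho>2 (proj2 E1 E2 ` X)) - int (vec.dim X) | X. X \<in> subspaces V}"

definition is_dsum :: "('a::{field,finite}, 'n::finite) vsp \<Rightarrow> (('a, 'n) vsp \<Rightarrow> nat)
     \<Rightarrow> ('a, 'n) vsp \<Rightarrow> (('a, 'n) vsp \<Rightarrow> nat) \<Rightarrow> ('a, 'n) vsp \<Rightarrow> (('a, 'n) vsp \<Rightarrow> nat) \<Rightarrow> bool" where
  "is_dsum E \<rho> E1 \<rho>1 E2 \<rho>2 \<longleftrightarrow> qmatroid E1 \<rho>1 \<and> qmatroid E2 \<rho>2 \<and> internal_dsum E E1 E2 \<and>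
     (\<forall>V \<in> subspaces E. int (\<rho> V) = dsum_rank E1 \<rho>1 E2 \<rho>2 V)"

definition reducible :: "('a::{field,finite}, 'n::finite) vsp \<Rightarrow> (('a, 'n) vsp \<Rightarrow> nat) \<Rightarrow> bool" where
  "reducible E \<rho> \<longleftrightarrow> (\<exists>E1 E2 \<rho>1 \<rho>2. E1 \<noteq> {0} \<and> E2 \<noteq> {0} \<and> is_dsum E \<rho> E1 \<rho>1 E2 \<rho>2)"

definition irreducible_qm :: "('a::{field,finite}, 'n::finite) vsp \<Rightarrow> (('a, 'n) vsp \<Rightarrow> nat) \<Rightarrow> bool" where
  "irreducible_qm E \<rho> \<longleftrightarrow> \<not> reducible E \<rho>"

end

theory Submission
  imports Defs
begin

text \<open>
  A q-matroid that is not full has a loop or a coloop, and either one splits off as a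
  one-dimensional direct summand (here \<open>dim E \<ge> 2\<close> keeps the complement nonzero).
  Every rank value is a minimum over cyclic flats,
  \<open>\<rho> V = min (\<rho> Z + dim (V + Z) - dim Z)\<close>, so a splitting of the lattice of cyclic flats
  as in (ii) lets one verify the rank formula of the direct sum with the witness \<open>V \<inter> Z\<close>.
  Conversely, in a direct sum the minimum defining the rank of a cyclic flat \<open>Z\<close> is
  attained only at \<open>Z\<close> itself, which together with flatness forces
  \<open>Z = (Z \<inter> E1) \<oplus> (Z \<inter> E2)\<close>; when the q-matroid is full both parts are again cyclic
  flats, and sums of cyclic flats of the two summands are cyclic flats, so \<open>E1, E2\<close>
  witness (ii).
\<close>

section \<open>Sums of subspaces\<close>

lemma subspaces_iff: "V \<in> subspaces E \<longleftrightarrow> vec.subspace V \<and> V \<subseteq> E"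
  by (simp add: subspaces_def)

lemma subspaces_trans: "V \<in> subspaces W \<Longrightarrow> W \<in> subspaces E \<Longrightarrow> V \<in> subspaces E"
  by (auto simp: subspaces_iff)

lemma subspace_ssum: "vec.subspace V \<Longrightarrow> vec.subspace W \<Longrightarrow> vec.subspace (ssum V W)"
  unfolding ssum_def by (rule vec.subspace_sums)

lemma ssum_commute: "ssum V W = ssum W V"
  unfolding ssum_def by (auto, metis add.commute, metis add.commute)

lemma subset_ssum_left: "vec.subspace W \<Longrightarrow> V \<subseteq> ssum V W"
  unfolding ssum_def using vec.subspace_0 by force

lemma subset_ssum_right: "vec.subspace V \<Longrightarrow> W \<subseteq> ssum V W"
  unfolding ssum_def using vec.subspace_0 by force

lemma ssum_least: "vec.subspace U \<Longrightarrow> V \<subseteq> U \<Longrightarrow> W \<subseteq> U \<Longrightarrow> ssum V W \<subseteq> U"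
  unfolding ssum_def using vec.subspace_add by blast

lemma ssum_mono: "V \<subseteq> V' \<Longrightarrow> W \<subseteq> W' \<Longrightarrow> ssum V W \<subseteq> ssum V' W'"
  unfolding ssum_def by blast

lemma ssum_idem: "vec.subspace V \<Longrightarrow> ssum V V = V"
  using ssum_least[of V V V] subset_ssum_left[of V V] by blast

lemma ssum_zero_left: "vec.subspace W \<Longrightarrow> ssum {0} W = W"
  unfolding ssum_def by auto

lemma ssum_in_subspaces:
  "vec.subspace E \<Longrightarrow> V \<in> subspaces E \<Longrightarrow> W \<in> subspaces E \<Longrightarrow> ssum V W \<in> subspaces E"
  by (simp add: subspaces_iff subspace_ssum ssum_least)

lemma Int_in_subspaces: "V \<in> subspaces E \<Longrightarrow> W \<in> subspaces E \<Longrightarrow> V \<inter> W \<in> subspaces E"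
  by (auto simp: subspaces_iff vec.subspace_inter)

lemma span_singleton_in_subspaces: "vec.subspace E \<Longrightarrow> x \<in> E \<Longrightarrow> vec.span {x} \<in> subspaces E"
  by (simp add: subspaces_iff vec.span_minimal)

lemma mem_ssum_span_singleton: "vec.subspace V \<Longrightarrow> x \<in> ssum V (vec.span {x})"
  using subset_ssum_right[of V "vec.span {x}"] vec.span_base[of x "{x}"] by blast

lemma ssum_span_singleton_subset:
  "vec.subspace U \<Longrightarrow> V \<subseteq> U \<Longrightarrow> x \<in> U \<Longrightarrow> ssum V (vec.span {x}) \<subseteq> U"
  by (simp add: ssum_least vec.span_minimal)

lemma subspace_dim_less:
  "vec.subspace V \<Longrightarrow> vec.subspace W \<Longrightarrow> V \<subset> W \<Longrightarrow> vec.dim V < vec.dim W"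
  using vec.dim_psubset[of V W] by (simp add: vec.span_eq_iff[THEN iffD2])

lemma dim_ssum_Int:
  "vec.subspace V \<Longrightarrow> vec.subspace W \<Longrightarrow>
   vec.dim (ssum V W) + vec.dim (V \<inter> W) = vec.dim V + vec.dim W"
  unfolding ssum_def by (rule vec.dim_sums_Int)

lemma dim_ssum_le:
  "vec.subspace V \<Longrightarrow> vec.subspace W \<Longrightarrow> vec.dim (ssum V W) \<le> vec.dim V + vec.dim W"
  using dim_ssum_Int by fastforce

lemma dim_ssum_disjoint:
  "vec.subspace V \<Longrightarrow> vec.subspace W \<Longrightarrow> V \<inter> W \<subseteq> {0} \<Longrightarrow>
   vec.dim (ssum V W) = vec.dim V + vec.dim W"
  using dim_ssum_Int[of V W] vec.dim_eq_0[THEN iffD2, of "V \<inter> W"] by simp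

lemma dim_ssum_span_singleton:
  assumes "vec.subspace V"
  shows "vec.dim (ssum V (vec.span {x})) = (if x \<in> V then vec.dim V else vec.dim V + 1)"
proof -
  have "ssum V (vec.span {x}) = vec.span (insert x V)"
    using assms unfolding ssum_def vec.span_Un[of V "{x}", simplified]
    by (simp add: vec.span_eq_iff[THEN iffD2])
  then show ?thesis
    using assms by (simp add: vec.dim_insert vec.span_eq_iff[THEN iffD2])
qed

lemma dim_ssum_span_singleton_le:
  "vec.subspace V \<Longrightarrow> vec.dim (ssum V (vec.span {x})) \<le> vec.dim V + 1"
  by (simp add: dim_ssum_span_singleton)

lemma dim_ssum_ssum_span_singleton_le:
  assumes "vec.subspace V" "vec.subspace Z"
  shows "vec.dim (ssum V (ssum Z (vec.span {x}))) \<le> vec.dim (ssum V Z) + 1"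
proof -
  have VZ: "vec.subspace (ssum V Z)" using assms by (rule subspace_ssum)
  have "ssum V (ssum Z (vec.span {x})) \<subseteq> ssum (ssum V Z) (vec.span {x})"
  proof (rule ssum_least[OF subspace_ssum[OF VZ vec.subspace_span]])
    show "V \<subseteq> ssum (ssum V Z) (vec.span {x})"
      using subset_ssum_left[OF assms(2), of V]
        subset_ssum_left[OF vec.subspace_span, of "ssum V Z"]
      by blast
    show "ssum Z (vec.span {x}) \<subseteq> ssum (ssum V Z) (vec.span {x})"
      by (rule ssum_mono[OF subset_ssum_right[OF assms(1)] order_refl])
  qed
  then show ?thesis
    using vec.dim_subset dim_ssum_span_singleton_le[OF VZ, of x] order_trans by blast
qed

lemma dim_le_dim_Int_add_one:
  assumes "vec.subspace X" "vec.subspace Z" "X \<subseteq> ssum Z (vec.span {x})"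
  shows "vec.dim X \<le> vec.dim (X \<inter> Z) + 1"
proof -
  have "vec.dim (ssum X Z) \<le> vec.dim (ssum Z (vec.span {x}))"
    using assms subset_ssum_left[OF vec.subspace_span]
    by (intro vec.dim_subset ssum_least subspace_ssum vec.subspace_span) auto
  then show ?thesis using dim_ssum_Int[OF assms(1,2)] dim_ssum_span_singleton_le[OF assms(2), of x]
    by linarith
qed

lemma extend_basis_of_subspace:
  assumes "vec.subspace A" "vec.subspace B" "A \<subseteq> B"
  obtains bA bB where "bA \<subseteq> bB" "vec.independent bB" "vec.span bA = A" "vec.span bB = B"
proof -
  obtain bA where bA: "bA \<subseteq> A" "vec.independent bA" "A \<subseteq> vec.span bA"
    by (rule vec.maximal_independent_subset)
  have "bA \<subseteq> B" using bA(1) assms(3) by blast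
  then obtain bB where bB: "bA \<subseteq> bB" "bB \<subseteq> B" "vec.independent bB" "B \<subseteq> vec.span bB"
    by (rule vec.maximal_independent_subset_extend[OF _ bA(2)])
  have "vec.span bA = A" "vec.span bB = B"
    using bA bB assms by (meson subset_antisym vec.span_minimal)+
  then show ?thesis using that bB by blast
qed

lemma hyperplane_between:
  assumes U: "vec.subspace U" and Y: "vec.subspace Y" and UY: "U \<subset> Y"
  obtains H x where "vec.subspace H" "U \<subseteq> H" "H \<subset> Y" "x \<in> Y" "ssum H (vec.span {x}) = Y"
proof -
  obtain bA bB where b: "bA \<subseteq> bB" "vec.independent bB" "vec.span bA = U" "vec.span bB = Y"
    by (rule extend_basis_of_subspace[OF U Y psubset_imp_subset[OF UY]])
  have "bA \<noteq> bB" using b(3,4) UY by blast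
  then obtain x where x: "x \<in> bB" "x \<notin> bA" using b(1) by blast
  define H where "H = vec.span (bB - {x})"
  have "vec.subspace H" unfolding H_def by (rule vec.subspace_span)
  moreover have "U \<subseteq> H" unfolding H_def using b x
    by (metis Diff_empty subset_Diff_insert vec.span_mono)
  moreover have "H \<subseteq> Y" unfolding H_def using b by (metis Diff_subset vec.span_mono)
  moreover have "x \<notin> H" unfolding H_def using b(2) x(1) vec.dependent_def by blast
  moreover have "x \<in> Y" using b x vec.span_base by blast
  moreover have "ssum H (vec.span {x}) = vec.span ((bB - {x}) \<union> {x})"
    unfolding ssum_def H_def vec.span_Un by simp
  then have "ssum H (vec.span {x}) = Y" using b x
    by (metis Un_insert_right insert_Diff sup_bot.right_neutral)
  ultimately show ?thesis using that by (metis psubsetI)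
qed

lemma internal_dsum_commute: "internal_dsum E E1 E2 \<Longrightarrow> internal_dsum E E2 E1"
  unfolding internal_dsum_def by (auto simp: ssum_commute)

lemma internal_dsum_in_subspaces:
  assumes "internal_dsum E E1 E2"
  shows "vec.subspace E" "E1 \<in> subspaces E" "E2 \<in> subspaces E"
  using assms subspace_ssum subset_ssum_left subset_ssum_right
  unfolding internal_dsum_def subspaces_iff by metis+

lemma dim_internal_dsum: "internal_dsum E E1 E2 \<Longrightarrow> vec.dim E = vec.dim E1 + vec.dim E2"
  unfolding internal_dsum_def using dim_ssum_disjoint by auto

lemma internal_dsum_complement_exists:
  assumes A: "vec.subspace A" and B: "vec.subspace B" and AB: "A \<subseteq> B"
  obtains C where "internal_dsum B A C"
proof -
  obtain bA bB where b: "bA \<subseteq> bB" "vec.independent bB" "vec.span bA = A" "vec.span bB = B"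
    by (rule extend_basis_of_subspace[OF A B AB])
  have fin: "finite bB" using b(2) vec.finiteI_independent by blast
  have card: "card bA = vec.dim A" "card bB = vec.dim B"
    using b vec.dim_span_eq_card_independent vec.independent_mono by metis+
  define C where "C = vec.span (bB - bA)"
  have sC: "vec.subspace C" unfolding C_def by (rule vec.subspace_span)
  have "ssum A C = vec.span (bA \<union> (bB - bA))"
    unfolding ssum_def C_def vec.span_Un b(3) by simp
  also have "\<dots> = B" using b by (simp add: Un_absorb1)
  finally have sum: "ssum A C = B" .
  have "vec.dim C \<le> card (bB - bA)"
    unfolding C_def using fin by (simp add: vec.dim_le_card')
  also have "\<dots> = card bB - card bA" using b(1) fin by (meson card_Diff_subset finite_subset)
  finally have "vec.dim (A \<inter> C) = 0"
    using card card_mono[OF fin b(1)] dim_ssum_Int[OF A sC, unfolded sum] by linarith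
  then have "A \<inter> C = {0}" using vec.subspace_0 A sC by auto
  then show ?thesis using that A sC sum unfolding internal_dsum_def by blast
qed

lemma internal_dsum_span_singleton:
  assumes W: "vec.subspace W" and x: "x \<notin> W"
  shows "internal_dsum (ssum W (vec.span {x})) W (vec.span {x})"
proof -
  have "x \<noteq> 0" using x vec.subspace_0[OF W] by blast
  then have "vec.dim (vec.span {x}) = 1" by (simp add: vec.dim_span vec.dim_singleton)
  moreover have "vec.dim (ssum W (vec.span {x})) = vec.dim W + 1"
    using dim_ssum_span_singleton[OF W] x by simp
  ultimately have "vec.dim (W \<inter> vec.span {x}) = 0"
    using dim_ssum_Int[OF W vec.subspace_span, of "{x}"] by linarith
  then have "W \<inter> vec.span {x} \<subseteq> {0}" by simp
  then have "W \<inter> vec.span {x} = {0}" using vec.subspace_0[OF W] vec.span_zero[of "{x}"] by blast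
  then show ?thesis using W unfolding internal_dsum_def by (simp add: vec.subspace_span)
qed

section \<open>Rank functions\<close>

lemma cyclic_flat_in_subspaces: "Z \<in> cyclic_flats E \<rho> \<Longrightarrow> Z \<in> subspaces E"
  by (simp add: cyclic_flats_def flat_def)

context
  fixes E :: "('a::{field,finite} ^ 'n::finite) set" and \<rho> :: "('a ^ 'n) set \<Rightarrow> nat"
  assumes qm: "qmatroid E \<rho>"
begin

lemma qmatroid_subspace: "vec.subspace E"
  using qm by (simp add: qmatroid_def)

lemma rank_le_dim: "V \<in> subspaces E \<Longrightarrow> \<rho> V \<le> vec.dim V"
  using qm by (simp add: qmatroid_def)

lemma rank_mono: "V \<in> subspaces E \<Longrightarrow> W \<in> subspaces E \<Longrightarrow> V \<subseteq> W \<Longrightarrow> \<rho> V \<le> \<rho> W"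
  using qm by (simp add: qmatroid_def)

lemma rank_submodular:
  "V \<in> subspaces E \<Longrightarrow> W \<in> subspaces E \<Longrightarrow> \<rho> (ssum V W) + \<rho> (V \<inter> W) \<le> \<rho> V + \<rho> W"
  using qm by (simp add: qmatroid_def)

lemma rank_ssum_le: "V \<in> subspaces E \<Longrightarrow> W \<in> subspaces E \<Longrightarrow> \<rho> (ssum V W) \<le> \<rho> V + \<rho> W"
  using rank_submodular by fastforce

lemma rank_zero: "\<rho> {0} = 0"
  using rank_le_dim[of "{0}"] vec.subspace_0[OF qmatroid_subspace] by (simp add: subspaces_iff)

lemma rank_span_singleton_le:
  assumes "x \<in> E" shows "\<rho> (vec.span {x}) \<le> 1"
proof -
  have "\<rho> (vec.span {x}) \<le> vec.dim (vec.span {x})"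
    by (rule rank_le_dim[OF span_singleton_in_subspaces[OF qmatroid_subspace assms]])
  then show ?thesis by (simp add: vec.dim_span vec.dim_singleton split: if_splits)
qed

lemma rank_increase_le_dim_increase:
  assumes A: "A \<in> subspaces E" and B: "B \<in> subspaces E" and AB: "A \<subseteq> B"
  shows "\<rho> B + vec.dim A \<le> \<rho> A + vec.dim B"
proof -
  have "vec.subspace A" "vec.subspace B" using A B by (simp_all add: subspaces_iff)
  then obtain C where D: "internal_dsum B A C" by (rule internal_dsum_complement_exists[OF _ _ AB])
  have CE: "C \<in> subspaces E" using internal_dsum_in_subspaces(3)[OF D] B by (rule subspaces_trans)
  have "\<rho> B \<le> \<rho> A + \<rho> C" using rank_ssum_le[OF A CE] D by (simp add: internal_dsum_def)
  then show ?thesis using rank_le_dim[OF CE] dim_internal_dsum[OF D] by linarith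
qed

lemma rank_ssum_diminishing_returns:
  assumes Y: "Y \<in> subspaces E" and Z: "Z \<in> subspaces E" and W: "W \<in> subspaces E" and YZ: "Y \<subseteq> Z"
  shows "\<rho> (ssum Z W) + \<rho> Y \<le> \<rho> Z + \<rho> (ssum Y W)"
proof -
  have sE: "vec.subspace E" by (rule qmatroid_subspace)
  have YW: "ssum Y W \<in> subspaces E" using ssum_in_subspaces[OF sE Y W] .
  have sZ: "vec.subspace Z" and sW: "vec.subspace W" using Z W by (simp_all add: subspaces_iff)
  have sY: "vec.subspace Y" using Y by (simp add: subspaces_iff)
  have "ssum Z (ssum Y W) \<subseteq> ssum Z W"
    by (rule ssum_least[OF subspace_ssum[OF sZ sW] subset_ssum_left[OF sW]
          ssum_mono[OF YZ order_refl]])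
  moreover have "ssum Z W \<subseteq> ssum Z (ssum Y W)"
    by (rule ssum_mono[OF order_refl subset_ssum_right[OF sY]])
  ultimately have eq: "ssum Z (ssum Y W) = ssum Z W" by (rule subset_antisym)
  have "Y \<subseteq> Z \<inter> ssum Y W" using YZ subset_ssum_left[OF sW] by blast
  then have "\<rho> Y \<le> \<rho> (Z \<inter> ssum Y W)" using rank_mono[OF Y Int_in_subspaces[OF Z YW]] by blast
  then show ?thesis using rank_submodular[OF Z YW, unfolded eq] by linarith
qed

lemma qmatroid_restrict: "Z \<in> subspaces E \<Longrightarrow> qmatroid Z \<rho>"
  using qm subspaces_trans unfolding qmatroid_def by (auto simp: subspaces_iff)

lemma cyclic_rank_drop:
  assumes Z: "Z \<in> subspaces E" and cy: "cyclic \<rho> Z" and U: "vec.subspace U" "U \<subset> Z"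
  shows "\<rho> Z + vec.dim U + 1 \<le> \<rho> U + vec.dim Z"
proof -
  have sZ: "vec.subspace Z" "Z \<subseteq> E" using Z by (simp_all add: subspaces_iff)
  obtain H x where H: "vec.subspace H" "U \<subseteq> H" "H \<subset> Z" "x \<in> Z" "ssum H (vec.span {x}) = Z"
    by (rule hyperplane_between[OF U(1) sZ(1) U(2)])
  have "x \<in> cyc \<rho> Z" using cy H(4) by (simp add: cyclic_def)
  moreover have "H \<in> subspaces Z" using H by (auto simp: subspaces_iff)
  ultimately have "\<rho> H = \<rho> Z" using H(5) unfolding cyc_def by blast
  moreover have "vec.dim H < vec.dim Z" using subspace_dim_less H(1,3) sZ(1) by blast
  moreover have "\<rho> H + vec.dim U \<le> \<rho> U + vec.dim H"
    using rank_increase_le_dim_increase[of U H] U H sZ by (auto simp: subspaces_iff)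
  ultimately show ?thesis by linarith
qed

lemma cyclicI:
  assumes Z: "Z \<in> subspaces E"
    and drop: "\<And>U. vec.subspace U \<Longrightarrow> U \<subset> Z \<Longrightarrow> \<rho> Z + vec.dim U + 1 \<le> \<rho> U + vec.dim Z"
  shows "cyclic \<rho> Z"
  unfolding cyclic_def cyc_def
proof (intro subset_antisym subsetI CollectI conjI ballI impI)
  fix x W assume W: "W \<in> subspaces Z" and e: "ssum W (vec.span {x}) = Z"
  have sW: "vec.subspace W" "W \<subseteq> Z" using W by (auto simp: subspaces_iff)
  show "\<rho> W = \<rho> Z"
  proof (cases "W = Z")
    case False
    then have "\<rho> Z + vec.dim W + 1 \<le> \<rho> W + vec.dim Z" using drop sW by blast
    moreover have "vec.dim Z \<le> vec.dim W + 1" using dim_ssum_span_singleton_le[OF sW(1), of x] e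
      by simp
    moreover have "\<rho> W \<le> \<rho> Z" using rank_mono[OF subspaces_trans[OF W Z] Z sW(2)] .
    ultimately show ?thesis by linarith
  qed simp
qed auto

lemma flat_rank_less: "flat E \<rho> F \<Longrightarrow> x \<in> E \<Longrightarrow> x \<notin> F \<Longrightarrow> \<rho> F < \<rho> (ssum F (vec.span {x}))"
  unfolding flat_def by blast

lemma flat_rank_le_imp_subset:
  assumes fl: "flat E \<rho> F" and Y: "Y \<in> subspaces E" and FY: "F \<subseteq> Y" and r: "\<rho> Y \<le> \<rho> F"
  shows "Y \<subseteq> F"
proof
  have sE: "vec.subspace E" by (rule qmatroid_subspace)
  have FE: "F \<in> subspaces E" using fl by (simp add: flat_def)
  fix y assume y: "y \<in> Y"
  then have yE: "y \<in> E" using Y by (auto simp: subspaces_iff)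
  have "ssum F (vec.span {y}) \<subseteq> Y"
    using ssum_span_singleton_subset FY y Y by (auto simp: subspaces_iff)
  then have "\<rho> (ssum F (vec.span {y})) \<le> \<rho> F"
    using rank_mono[OF ssum_in_subspaces[OF sE FE span_singleton_in_subspaces[OF sE yE]] Y] r
    by linarith
  then show "y \<in> F" using flat_rank_less[OF fl yE] by fastforce
qed

lemma flat_rank_Int_less:
  assumes fl: "flat E \<rho> F" and U: "U \<in> subspaces E" and nU: "\<not> U \<subseteq> F"
  shows "\<rho> (U \<inter> F) < \<rho> U"
proof -
  have sE: "vec.subspace E" by (rule qmatroid_subspace)
  have FE: "F \<in> subspaces E" using fl by (simp add: flat_def)
  have sU: "vec.subspace U" and UsE: "U \<subseteq> E" using U by (auto simp: subspaces_iff)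
  obtain u where u: "u \<in> U" "u \<notin> F" using nU by blast
  have uE: "u \<in> E" using u UsE by blast
  have UF: "U \<inter> F \<in> subspaces E" using Int_in_subspaces[OF U FE] .
  have sUF: "vec.subspace (U \<inter> F)" using UF by (simp add: subspaces_iff)
  define B where "B = ssum (U \<inter> F) (vec.span {u})"
  have BU: "B \<subseteq> U" unfolding B_def using ssum_span_singleton_subset[OF sU _ u(1)] by blast
  have BE: "B \<in> subspaces E" unfolding B_def
    using ssum_in_subspaces[OF sE UF span_singleton_in_subspaces[OF sE uE]] .
  have "ssum F (vec.span {u}) \<subseteq> ssum F B" unfolding B_def using ssum_mono subset_ssum_right[OF sUF]
    by blast
  then have "\<rho> (ssum F (vec.span {u})) \<le> \<rho> (ssum F B)"
    using rank_mono ssum_in_subspaces[OF sE FE span_singleton_in_subspaces[OF sE uE]]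
      ssum_in_subspaces[OF sE FE BE] by blast
  moreover have "U \<inter> F \<subseteq> F \<inter> B" unfolding B_def using subset_ssum_left[OF vec.subspace_span]
    by blast
  then have "\<rho> (U \<inter> F) \<le> \<rho> (F \<inter> B)" using rank_mono[OF UF Int_in_subspaces[OF FE BE]] by blast
  ultimately show ?thesis
    using rank_submodular[OF FE BE] flat_rank_less[OF fl uE u(2)] rank_mono[OF BE U BU] by linarith
qed

lemma qclosure_zero_eq_zero_iff: "qclosure E \<rho> {0} = {0} \<longleftrightarrow> (\<forall>u \<in> E. \<rho> (vec.span {u}) = 0 \<longrightarrow> u = 0)"
proof -
  have "qclosure E \<rho> {0} = vec.span {u \<in> E. \<rho> (vec.span {u}) = 0}"
    unfolding qclosure_def by (simp add: ssum_zero_left vec.subspace_span rank_zero)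
  moreover have "vec.span S = {0} \<longleftrightarrow> S \<subseteq> {0}" for S :: "('a ^ 'n) set"
    using vec.span_superset[of S] vec.span_mono[of S "{0}"] vec.span_zero[of S]
    by (auto simp: vec.span_singleton)
  ultimately show ?thesis by blast
qed

lemma full_rank_span_singleton: "full E \<rho> \<Longrightarrow> u \<in> E \<Longrightarrow> u \<noteq> 0 \<Longrightarrow> \<rho> (vec.span {u}) = 1"
  using qclosure_zero_eq_zero_iff rank_span_singleton_le unfolding full_def by fastforce

text \<open>A cyclic flat realising the bound is obtained by minimising \<open>2 \<rho> Z - dim Z\<close>:
  adjoining a vector without raising the rank, or passing to a proper subspace
  without the maximal drop of rank, would preserve the bound and decrease this quantity.\<close>

lemma exists_cyclic_flat_rank_le:
  assumes V: "V \<in> subspaces E"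
  obtains Z where "Z \<in> cyclic_flats E \<rho>" "\<rho> Z + vec.dim (ssum V Z) \<le> \<rho> V + vec.dim Z"
proof -
  have sE: "vec.subspace E" by (rule qmatroid_subspace)
  have sV: "vec.subspace V" using V by (simp add: subspaces_iff)
  define T where "T Z \<longleftrightarrow> Z \<in> subspaces E \<and> \<rho> Z + vec.dim (ssum V Z) \<le> \<rho> V + vec.dim Z" for Z
  define g where "g Z = 2 * \<rho> Z + (vec.dim E - vec.dim Z)" for Z
  have "T V" unfolding T_def using V ssum_idem[OF sV] by simp
  then obtain Z where TZ: "T Z" and minZ: "\<And>Y. T Y \<Longrightarrow> g Z \<le> g Y"
    using ex_has_least_nat[of T V g] by blast
  have ZE: "Z \<in> subspaces E" and sZ: "vec.subspace Z" and dZE: "vec.dim Z \<le> vec.dim E"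
    using TZ vec.dim_subset by (auto simp: T_def subspaces_iff)
  have "flat E \<rho> Z"
    unfolding flat_def
  proof (intro conjI ballI ZE)
    fix x assume x: "x \<in> E - Z"
    let ?Z' = "ssum Z (vec.span {x})"
    have Z'E: "?Z' \<in> subspaces E"
      using ssum_in_subspaces[OF sE ZE span_singleton_in_subspaces[OF sE]] x by blast
    have dZ': "vec.dim ?Z' = vec.dim Z + 1" using dim_ssum_span_singleton[OF sZ] x by simp
    have "vec.dim ?Z' \<le> vec.dim E" using Z'E by (simp add: subspaces_iff vec.dim_subset)
    have "\<not> \<rho> ?Z' \<le> \<rho> Z"
    proof
      assume "\<rho> ?Z' \<le> \<rho> Z"
      moreover then have "T ?Z'"
        using TZ Z'E dZ' dim_ssum_ssum_span_singleton_le[OF sV sZ, of x] unfolding T_def by linarith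
      ultimately show False using minZ[of ?Z'] dZ' \<open>vec.dim ?Z' \<le> vec.dim E\<close> unfolding g_def
        by linarith
    qed
    then show "\<rho> Z < \<rho> ?Z'" by linarith
  qed
  moreover have "cyclic \<rho> Z"
  proof (rule cyclicI[OF ZE], rule ccontr)
    fix U assume U: "vec.subspace U" "U \<subset> Z" and nodrop: "\<not> \<rho> Z + vec.dim U + 1 \<le> \<rho> U + vec.dim Z"
    have UE: "U \<in> subspaces E" using U ZE by (auto simp: subspaces_iff)
    have "\<rho> Z + vec.dim U \<le> \<rho> U + vec.dim Z"
      using rank_increase_le_dim_increase[OF UE ZE] U(2) by blast
    moreover have "vec.dim U < vec.dim Z" using subspace_dim_less U sZ by blast
    moreover have "vec.dim (ssum V U) \<le> vec.dim (ssum V Z)"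
      using vec.dim_subset ssum_mono[OF order_refl] U(2) by blast
    ultimately have "T U" using TZ UE nodrop unfolding T_def by linarith
    then show False using minZ[of U] nodrop \<open>vec.dim U < vec.dim Z\<close> dZE unfolding g_def by linarith
  qed
  ultimately show ?thesis using that TZ unfolding cyclic_flats_def T_def by blast
qed

end

section \<open>Projections of an internal direct sum\<close>

lemma dim_ssum_parts:
  assumes D: "internal_dsum E E1 E2" and Y: "Y1 \<in> subspaces E1" "Y2 \<in> subspaces E2"
  shows "vec.dim (ssum Y1 Y2) = vec.dim Y1 + vec.dim Y2"
proof -
  have "Y1 \<inter> Y2 \<subseteq> {0}" using Y D unfolding subspaces_iff internal_dsum_def by blast
  then show ?thesis using Y by (intro dim_ssum_disjoint) (auto simp: subspaces_iff)
qed

lemma proj2_eq_proj1_swap: "proj2 E1 E2 = proj1 E2 E1"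
  by (simp add: fun_eq_iff proj1_def proj2_def)

lemma proj_of_sum_parts:
  assumes D: "internal_dsum E E1 E2" and "a \<in> E1" "b \<in> E2"
  shows "proj1 E1 E2 (a + b) = a" "proj2 E1 E2 (a + b) = b"
proof -
  have proj1_add: "proj1 F1 F2 (a + b) = a"
    if "internal_dsum E F1 F2" "a \<in> F1" "b \<in> F2" for F1 F2 a b
    unfolding proj1_def
  proof (rule the_equality)
    fix e assume e: "e \<in> F1 \<and> a + b - e \<in> F2"
    have F: "vec.subspace F1" "vec.subspace F2" "F1 \<inter> F2 = {0}"
      using that(1) unfolding internal_dsum_def by auto
    have "e - a \<in> F1" using F(1) e that(2) by (simp add: vec.subspace_diff)
    moreover have "e - a = b - (a + b - e)" by simp
    then have "e - a \<in> F2" using F(2) e that(3) by (metis vec.subspace_diff)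
    ultimately have "e - a = 0" using F(3) by blast
    then show "e = a" by simp
  qed (use that in simp)
  show "proj1 E1 E2 (a + b) = a" using proj1_add[OF D assms(2,3)] .
  show "proj2 E1 E2 (a + b) = b"
    using proj1_add[OF internal_dsum_commute[OF D] assms(3,2)]
    by (simp add: proj2_eq_proj1_swap add.commute)
qed

lemma proj_decomp:
  assumes D: "internal_dsum E E1 E2" and "x \<in> E"
  shows "proj1 E1 E2 x \<in> E1" "proj2 E1 E2 x \<in> E2" "proj1 E1 E2 x + proj2 E1 E2 x = x"
proof -
  obtain a b where "a \<in> E1" "b \<in> E2" "x = a + b"
    using assms unfolding internal_dsum_def ssum_def by blast
  then show "proj1 E1 E2 x \<in> E1" "proj2 E1 E2 x \<in> E2" "proj1 E1 E2 x + proj2 E1 E2 x = x"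
    using proj_of_sum_parts[OF D] by simp_all
qed

text \<open>\<open>proj1\<close> is defined by \<open>THE\<close> and is unspecified outside \<open>E\<close>; this description
  of its images replaces a linearity argument.\<close>

lemma proj1_image_eq:
  assumes D: "internal_dsum E E1 E2" and X: "X \<subseteq> E"
  shows "proj1 E1 E2 ` X = ssum X E2 \<inter> E1"
proof (intro equalityI subsetI)
  have E2: "vec.subspace E2" using D by (simp add: internal_dsum_def)
  fix y
  assume "y \<in> proj1 E1 E2 ` X"
  then obtain x where x: "x \<in> X" "y = proj1 E1 E2 x" by blast
  have p: "proj1 E1 E2 x \<in> E1" "proj2 E1 E2 x \<in> E2" "proj1 E1 E2 x + proj2 E1 E2 x = x"
    using proj_decomp[OF D] x(1) X by auto
  then have "y = x + - proj2 E1 E2 x" "- proj2 E1 E2 x \<in> E2"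
    using x(2) E2 vec.subspace_neg by (auto simp: eq_diff_eq[symmetric])
  then have "y \<in> ssum X E2" using x(1) unfolding ssum_def by blast
  then show "y \<in> ssum X E2 \<inter> E1" using p(1) x(2) by simp
next
  have E2: "vec.subspace E2" using D by (simp add: internal_dsum_def)
  fix y
  assume "y \<in> ssum X E2 \<inter> E1"
  then obtain x e where xe: "x \<in> X" "e \<in> E2" "y = x + e" "y \<in> E1" unfolding ssum_def by blast
  then have "proj1 E1 E2 (y + - e) = y" using proj_of_sum_parts(1)[OF D] E2 vec.subspace_neg
    by blast
  then show "y \<in> proj1 E1 E2 ` X" using xe by (metis add_diff_cancel diff_conv_add_uminus image_eqI)
qed

lemma proj_image_in_subspaces:
  assumes D: "internal_dsum E E1 E2" and X: "X \<in> subspaces E"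
  shows "proj1 E1 E2 ` X \<in> subspaces E1" "proj2 E1 E2 ` X \<in> subspaces E2"
proof -
  have *: "proj1 F1 F2 ` X \<in> subspaces F1" if "internal_dsum E F1 F2" for F1 F2
    using proj1_image_eq[OF that] that X
    by (auto simp: subspaces_iff internal_dsum_def intro!: vec.subspace_inter subspace_ssum)
  show "proj1 E1 E2 ` X \<in> subspaces E1" using *[OF D] .
  show "proj2 E1 E2 ` X \<in> subspaces E2"
    using *[OF internal_dsum_commute[OF D]] by (simp add: proj2_eq_proj1_swap)
qed

lemma proj_image_in_subspaces_ambient:
  assumes D: "internal_dsum E E1 E2" and X: "X \<in> subspaces E"
  shows "proj1 E1 E2 ` X \<in> subspaces E" "proj2 E1 E2 ` X \<in> subspaces E"
  using proj_image_in_subspaces[OF D X] internal_dsum_in_subspaces[OF D] subspaces_trans by blast+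

lemma subset_ssum_proj_images:
  assumes D: "internal_dsum E E1 E2" and X: "X \<subseteq> E"
  shows "X \<subseteq> ssum (proj1 E1 E2 ` X) (proj2 E1 E2 ` X)"
  unfolding ssum_def using proj_decomp(3)[OF D] X by (blast intro: sym)

lemma proj_images_subset:
  assumes D: "internal_dsum E E1 E2" and "Y1 \<subseteq> E1" "Y2 \<subseteq> E2" "X \<subseteq> ssum Y1 Y2"
  shows "proj1 E1 E2 ` X \<subseteq> Y1" "proj2 E1 E2 ` X \<subseteq> Y2"
  using assms proj_of_sum_parts[OF D] unfolding ssum_def by fastforce+

lemma dim_Int_ssum_le_dim_proj_images:
  assumes D: "internal_dsum E E1 E2" and Y: "Y1 \<in> subspaces E1" "Y2 \<in> subspaces E2"
    and X: "X \<in> subspaces E"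
  shows "vec.dim (X \<inter> ssum Y1 Y2) \<le> vec.dim (proj1 E1 E2 ` X \<inter> Y1) + vec.dim (proj2 E1 E2 ` X \<inter> Y2)"
proof -
  let ?I1 = "proj1 E1 E2 ` X \<inter> Y1" and ?I2 = "proj2 E1 E2 ` X \<inter> Y2"
  have "X \<inter> ssum Y1 Y2 \<subseteq> ssum ?I1 ?I2"
  proof
    fix z assume z: "z \<in> X \<inter> ssum Y1 Y2"
    then have "proj1 E1 E2 z \<in> Y1" "proj2 E1 E2 z \<in> Y2"
      using proj_images_subset[OF D _ _, of Y1 Y2 "{z}"] Y by (auto simp: subspaces_iff)
    moreover have "z = proj1 E1 E2 z + proj2 E1 E2 z" using proj_decomp(3)[OF D] z X
      by (auto simp: subspaces_iff)
    ultimately show "z \<in> ssum ?I1 ?I2" using z unfolding ssum_def by blast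
  qed
  moreover have "vec.subspace ?I1" "vec.subspace ?I2"
    using proj_image_in_subspaces[OF D X] Y by (auto simp: subspaces_iff intro: vec.subspace_inter)
  ultimately show ?thesis using order_trans[OF vec.dim_subset dim_ssum_le] by blast
qed

lemma proj_images_ssum:
  assumes D: "internal_dsum E E1 E2" and Y: "Y1 \<in> subspaces E1" "Y2 \<in> subspaces E2"
  shows "proj1 E1 E2 ` ssum Y1 Y2 = Y1" "proj2 E1 E2 ` ssum Y1 Y2 = Y2"
proof -
  have Y': "vec.subspace Y1" "vec.subspace Y2" "Y1 \<subseteq> E1" "Y2 \<subseteq> E2" using Y
    by (auto simp: subspaces_iff)
  have z: "0 \<in> E1" "0 \<in> E2" "0 \<in> Y1" "0 \<in> Y2"
    using D Y'(1,2) vec.subspace_0 unfolding internal_dsum_def by auto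
  have "y \<in> proj1 E1 E2 ` ssum Y1 Y2" if "y \<in> Y1" for y
    using that z proj_of_sum_parts(1)[OF D, of y 0] Y'(3) unfolding ssum_def by force
  moreover have "y \<in> proj2 E1 E2 ` ssum Y1 Y2" if "y \<in> Y2" for y
    using that z proj_of_sum_parts(2)[OF D, of 0 y] Y'(4) unfolding ssum_def by force
  ultimately show "proj1 E1 E2 ` ssum Y1 Y2 = Y1" "proj2 E1 E2 ` ssum Y1 Y2 = Y2"
    using proj_images_subset[OF D Y'(3,4) order_refl] by blast+
qed

lemma proj_images_left:
  assumes D: "internal_dsum E E1 E2" and X: "X \<in> subspaces E1"
  shows "proj1 E1 E2 ` X = X" "proj2 E1 E2 ` X = {0}"
proof -
  have "{0} \<in> subspaces E2"
    using D vec.subspace_0 vec.subspace_single_0 by (auto simp: internal_dsum_def subspaces_iff)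
  moreover have "ssum X {0} = X" using X ssum_zero_left ssum_commute by (metis subspaces_iff)
  ultimately show "proj1 E1 E2 ` X = X" "proj2 E1 E2 ` X = {0}"
    using proj_images_ssum[OF D X] by metis+
qed

lemma dim_le_dim_proj_images:
  assumes D: "internal_dsum E E1 E2" and X: "X \<in> subspaces E"
  shows "vec.dim X \<le> vec.dim (proj1 E1 E2 ` X) + vec.dim (proj2 E1 E2 ` X)"
proof -
  have "vec.dim X \<le> vec.dim (ssum (proj1 E1 E2 ` X) (proj2 E1 E2 ` X))"
    using vec.dim_subset subset_ssum_proj_images[OF D] X by (auto simp: subspaces_iff)
  also have "\<dots> \<le> vec.dim (proj1 E1 E2 ` X) + vec.dim (proj2 E1 E2 ` X)"
    using dim_ssum_le proj_image_in_subspaces[OF D X] by (auto simp: subspaces_iff)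
  finally show ?thesis .
qed

lemma dsum_rank_le:
  assumes "X \<in> subspaces V"
  shows "dsum_rank E1 \<rho>1 E2 \<rho>2 V + int (vec.dim X)
           \<le> int (\<rho>1 (proj1 E1 E2 ` X)) + int (\<rho>2 (proj2 E1 E2 ` X)) + int (vec.dim V)"
proof -
  have "Min {int (\<rho>1 (proj1 E1 E2 ` X)) + int (\<rho>2 (proj2 E1 E2 ` X)) - int (vec.dim X)
            | X. X \<in> subspaces V}
          \<le> int (\<rho>1 (proj1 E1 E2 ` X)) + int (\<rho>2 (proj2 E1 E2 ` X)) - int (vec.dim X)"
    using assms by (intro Min_le) auto
  then show ?thesis unfolding dsum_rank_def by linarith
qed

lemma dsum_rank_attained:
  assumes "vec.subspace V"
  obtains X where "X \<in> subspaces V" "dsum_rank E1 \<rho>1 E2 \<rho>2 V + int (vec.dim X)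
           = int (\<rho>1 (proj1 E1 E2 ` X)) + int (\<rho>2 (proj2 E1 E2 ` X)) + int (vec.dim V)"
proof -
  let ?S = "{int (\<rho>1 (proj1 E1 E2 ` X)) + int (\<rho>2 (proj2 E1 E2 ` X)) - int (vec.dim X)
            | X. X \<in> subspaces V}"
  have "V \<in> subspaces V" using assms by (simp add: subspaces_iff)
  then have "Min ?S \<in> ?S" by (intro Min_in) auto
  then show ?thesis using that unfolding dsum_rank_def by force
qed

lemma dsum_rank_eqI:
  assumes "\<And>X. X \<in> subspaces V \<Longrightarrow>
      r + vec.dim X \<le> \<rho>1 (proj1 E1 E2 ` X) + \<rho>2 (proj2 E1 E2 ` X) + vec.dim V"
    and "X \<in> subspaces V" "\<rho>1 (proj1 E1 E2 ` X) + \<rho>2 (proj2 E1 E2 ` X) + vec.dim V \<le> r + vec.dim X"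
  shows "dsum_rank E1 \<rho>1 E2 \<rho>2 V = int r"
proof -
  let ?f = "\<lambda>X. int (\<rho>1 (proj1 E1 E2 ` X)) + int (\<rho>2 (proj2 E1 E2 ` X)) - int (vec.dim X)"
  have "Min {?f X | X. X \<in> subspaces V} = int r - int (vec.dim V)"
  proof (rule Min_eqI)
    fix y assume "y \<in> {?f X | X. X \<in> subspaces V}"
    then show "int r - int (vec.dim V) \<le> y" using assms(1) by force
  next
    have "?f X = int r - int (vec.dim V)" using assms(1)[OF assms(2)] assms(3) by linarith
    then show "int r - int (vec.dim V) \<in> {?f X | X. X \<in> subspaces V}" using assms(2) by force
  qed auto
  then show ?thesis unfolding dsum_rank_def by simp
qed

lemma is_dsum_commute: "is_dsum E \<rho> E1 \<rho>1 E2 \<rho>2 \<Longrightarrow> is_dsum E \<rho> E2 \<rho>2 E1 \<rho>1"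
  unfolding is_dsum_def dsum_rank_def proj2_eq_proj1_swap
  by (simp add: internal_dsum_commute add.commute)

lemma is_dsum_rank_le:
  assumes "is_dsum E \<rho> E1 \<rho>1 E2 \<rho>2" "V \<in> subspaces E" "X \<in> subspaces V"
  shows "\<rho> V + vec.dim X \<le> \<rho>1 (proj1 E1 E2 ` X) + \<rho>2 (proj2 E1 E2 ` X) + vec.dim V"
  using assms dsum_rank_le[OF assms(3), of E1 \<rho>1 E2 \<rho>2] unfolding is_dsum_def by force

lemma is_dsum_rank_attained:
  assumes "is_dsum E \<rho> E1 \<rho>1 E2 \<rho>2" "V \<in> subspaces E"
  obtains X where "X \<in> subspaces V"
    "\<rho> V + vec.dim X = \<rho>1 (proj1 E1 E2 ` X) + \<rho>2 (proj2 E1 E2 ` X) + vec.dim V"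
proof -
  have "vec.subspace V" using assms(2) by (simp add: subspaces_iff)
  then obtain X where "X \<in> subspaces V" "dsum_rank E1 \<rho>1 E2 \<rho>2 V + int (vec.dim X)
           = int (\<rho>1 (proj1 E1 E2 ` X)) + int (\<rho>2 (proj2 E1 E2 ` X)) + int (vec.dim V)"
    by (rule dsum_rank_attained)
  then show ?thesis using that assms unfolding is_dsum_def by force
qed

section \<open>Direct sums of q-matroids\<close>

lemma is_dsum_rank_left:
  assumes ds: "is_dsum E \<rho> E1 \<rho>1 E2 \<rho>2" and V: "V \<in> subspaces E1"
  shows "\<rho> V = \<rho>1 V"
proof -
  have D: "internal_dsum E E1 E2" and qm1: "qmatroid E1 \<rho>1" and qm2: "qmatroid E2 \<rho>2"
    using ds by (simp_all add: is_dsum_def)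
  have VE: "V \<in> subspaces E" using V internal_dsum_in_subspaces(2)[OF D] by (rule subspaces_trans)
  have "V \<in> subspaces V" using V by (simp add: subspaces_iff)
  then have "\<rho> V \<le> \<rho>1 V"
    using is_dsum_rank_le[OF ds VE] proj_images_left[OF D V] rank_zero[OF qm2] by fastforce
  moreover obtain X where X: "X \<in> subspaces V"
    "\<rho> V + vec.dim X = \<rho>1 (proj1 E1 E2 ` X) + \<rho>2 (proj2 E1 E2 ` X) + vec.dim V"
    by (rule is_dsum_rank_attained[OF ds VE])
  moreover have XE1: "X \<in> subspaces E1" using X(1) V by (rule subspaces_trans)
  moreover have "\<rho>1 V + vec.dim X \<le> \<rho>1 X + vec.dim V"
    using rank_increase_le_dim_increase[OF qm1 XE1 V] X(1) by (simp add: subspaces_iff)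
  ultimately show ?thesis using proj_images_left[OF D XE1] rank_zero[OF qm2] by simp
qed

lemma is_dsum_rank_right: "is_dsum E \<rho> E1 \<rho>1 E2 \<rho>2 \<Longrightarrow> V \<in> subspaces E2 \<Longrightarrow> \<rho> V = \<rho>2 V"
  using is_dsum_rank_left is_dsum_commute by blast

lemma is_dsum_rank_attained_self:
  assumes ds: "is_dsum E \<rho> E1 \<rho>1 E2 \<rho>2" and V: "V \<in> subspaces E"
  obtains X where "X \<in> subspaces V"
    "\<rho> V + vec.dim X = \<rho> (proj1 E1 E2 ` X) + \<rho> (proj2 E1 E2 ` X) + vec.dim V"
proof -
  have D: "internal_dsum E E1 E2" using ds by (simp add: is_dsum_def)
  obtain X where X: "X \<in> subspaces V"
    "\<rho> V + vec.dim X = \<rho>1 (proj1 E1 E2 ` X) + \<rho>2 (proj2 E1 E2 ` X) + vec.dim V"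
    by (rule is_dsum_rank_attained[OF ds V])
  have "X \<in> subspaces E" using X(1) V by (rule subspaces_trans)
  then show ?thesis
    using that[OF X(1)] X(2) proj_image_in_subspaces[OF D]
      is_dsum_rank_left[OF ds] is_dsum_rank_right[OF ds] by simp
qed

context
  fixes E :: "('a::{field,finite} ^ 'n::finite) set" and \<rho> :: "('a ^ 'n) set \<Rightarrow> nat"
  assumes qm: "qmatroid E \<rho>"
begin

lemma rank_le_proj_ranks:
  assumes D: "internal_dsum E E1 E2" and V: "V \<in> subspaces E" and X: "X \<in> subspaces V"
  shows "\<rho> V + vec.dim X \<le> \<rho> (proj1 E1 E2 ` X) + \<rho> (proj2 E1 E2 ` X) + vec.dim V"
proof -
  have XE: "X \<in> subspaces E" using X V by (rule subspaces_trans)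
  have P: "proj1 E1 E2 ` X \<in> subspaces E" "proj2 E1 E2 ` X \<in> subspaces E"
    using proj_image_in_subspaces_ambient[OF D XE] by auto
  have "X \<subseteq> ssum (proj1 E1 E2 ` X) (proj2 E1 E2 ` X)"
    using subset_ssum_proj_images[OF D] XE by (simp add: subspaces_iff)
  then have "\<rho> X \<le> \<rho> (ssum (proj1 E1 E2 ` X) (proj2 E1 E2 ` X))"
    using rank_mono[OF qm XE ssum_in_subspaces[OF qmatroid_subspace[OF qm] P]] by blast
  also have "\<dots> \<le> \<rho> (proj1 E1 E2 ` X) + \<rho> (proj2 E1 E2 ` X)" using rank_ssum_le[OF qm P] .
  finally show ?thesis
    using rank_increase_le_dim_increase[OF qm XE V] X by (simp add: subspaces_iff)
qed

lemma is_dsumI: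
  assumes D: "internal_dsum E E1 E2"
    and witness: "\<And>V. V \<in> subspaces E \<Longrightarrow> \<exists>X \<in> subspaces V.
       \<rho> (proj1 E1 E2 ` X) + \<rho> (proj2 E1 E2 ` X) + vec.dim V \<le> \<rho> V + vec.dim X"
  shows "is_dsum E \<rho> E1 \<rho> E2 \<rho>"
  unfolding is_dsum_def
proof (intro conjI ballI D)
  show "qmatroid E1 \<rho>" "qmatroid E2 \<rho>"
    using qmatroid_restrict[OF qm] internal_dsum_in_subspaces[OF D] by auto
  fix V assume V: "V \<in> subspaces E"
  then obtain X where "X \<in> subspaces V"
    "\<rho> (proj1 E1 E2 ` X) + \<rho> (proj2 E1 E2 ` X) + vec.dim V \<le> \<rho> V + vec.dim X"
    using witness by blast
  then show "int (\<rho> V) = dsum_rank E1 \<rho> E2 \<rho> V"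
    using dsum_rank_eqI[OF rank_le_proj_ranks[OF D V]] by simp
qed

lemma is_dsum_rank_ssum:
  assumes ds: "is_dsum E \<rho> E1 \<rho>1 E2 \<rho>2" and Y: "Y1 \<in> subspaces E1" "Y2 \<in> subspaces E2"
  shows "\<rho> (ssum Y1 Y2) = \<rho> Y1 + \<rho> Y2"
proof -
  have D: "internal_dsum E E1 E2" using ds by (simp add: is_dsum_def)
  have YE: "Y1 \<in> subspaces E" "Y2 \<in> subspaces E"
    using Y internal_dsum_in_subspaces[OF D] subspaces_trans by blast+
  have SE: "ssum Y1 Y2 \<in> subspaces E" using ssum_in_subspaces[OF qmatroid_subspace[OF qm] YE] .
  obtain X where X: "X \<in> subspaces (ssum Y1 Y2)"
    "\<rho> (ssum Y1 Y2) + vec.dim X = \<rho> (proj1 E1 E2 ` X) + \<rho> (proj2 E1 E2 ` X) + vec.dim (ssum Y1 Y2)"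
    by (rule is_dsum_rank_attained_self[OF ds SE])
  have XE: "X \<in> subspaces E" using X(1) SE by (rule subspaces_trans)
  have PE: "proj1 E1 E2 ` X \<in> subspaces E" "proj2 E1 E2 ` X \<in> subspaces E"
    using proj_image_in_subspaces_ambient[OF D XE] by auto
  have PY: "proj1 E1 E2 ` X \<subseteq> Y1" "proj2 E1 E2 ` X \<subseteq> Y2"
    using proj_images_subset[OF D, of Y1 Y2 X] X(1) Y by (simp_all add: subspaces_iff)
  have "vec.dim (ssum Y1 Y2) = vec.dim Y1 + vec.dim Y2" by (rule dim_ssum_parts[OF D Y])
  then have "\<rho> Y1 + \<rho> Y2 \<le> \<rho> (ssum Y1 Y2)"
    using X(2) dim_le_dim_proj_images[OF D XE]
      rank_increase_le_dim_increase[OF qm PE(1) YE(1) PY(1)]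
      rank_increase_le_dim_increase[OF qm PE(2) YE(2) PY(2)] by linarith
  then show ?thesis using rank_ssum_le[OF qm YE] by linarith
qed

lemma reducible_if_loop:
  assumes d2: "vec.dim E \<ge> 2" and u: "u \<in> E" "u \<noteq> 0" and loop: "\<rho> (vec.span {u}) = 0"
  shows "reducible E \<rho>"
proof -
  have sE: "vec.subspace E" by (rule qmatroid_subspace[OF qm])
  define L where "L = vec.span {u}"
  have LE: "L \<in> subspaces E" unfolding L_def using span_singleton_in_subspaces[OF sE u(1)] .
  then have "vec.subspace L" "L \<subseteq> E" by (simp_all add: subspaces_iff)
  then obtain C where D: "internal_dsum E L C" by (rule internal_dsum_complement_exists[OF _ sE])
  have "vec.dim L = 1" unfolding L_def using u(2) by (simp add: vec.dim_span vec.dim_singleton)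
  then have nonzero: "L \<noteq> {0}" "C \<noteq> {0}"
    using dim_internal_dsum[OF D] d2 by (auto simp: vec.dim_singleton)
  have "is_dsum E \<rho> L \<rho> C \<rho>"
  proof (rule is_dsumI[OF D])
    fix V assume V: "V \<in> subspaces E"
    have VE: "V \<subseteq> E" using V by (simp add: subspaces_iff)
    have PE: "proj1 L C ` V \<in> subspaces E" "proj2 L C ` V \<in> subspaces E"
      using proj_image_in_subspaces_ambient[OF D V] by auto
    have "proj1 L C ` V \<subseteq> L" using proj_decomp(1)[OF D] VE by blast
    then have "\<rho> (proj1 L C ` V) = 0" using rank_mono[OF qm PE(1) LE] loop L_def by simp
    moreover have "proj2 L C ` V \<subseteq> ssum V L"
      using proj1_image_eq[OF internal_dsum_commute[OF D] VE] by (simp add: proj2_eq_proj1_swap)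
    then have "\<rho> (proj2 L C ` V) \<le> \<rho> (ssum V L)"
      using rank_mono[OF qm PE(2) ssum_in_subspaces[OF sE V LE]] by blast
    moreover have "\<rho> (ssum V L) \<le> \<rho> V" using rank_ssum_le[OF qm V LE] loop L_def by simp
    moreover have "V \<in> subspaces V" using V by (simp add: subspaces_iff)
    ultimately show "\<exists>X \<in> subspaces V.
        \<rho> (proj1 L C ` X) + \<rho> (proj2 L C ` X) + vec.dim V \<le> \<rho> V + vec.dim X" by force
  qed
  then show ?thesis unfolding reducible_def using nonzero by blast
qed

lemma rank_Int_hyperplane_le:
  assumes W: "W \<in> subspaces E" and dW: "vec.dim E = vec.dim W + 1" and rW: "\<rho> E = \<rho> W + 1"
    and V: "V \<in> subspaces E"
  shows "\<rho> (V \<inter> W) + vec.dim V \<le> \<rho> V + vec.dim (V \<inter> W)"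
proof (cases "V \<subseteq> W")
  case True
  then show ?thesis by (simp add: Int_absorb2)
next
  case False
  have sE: "vec.subspace E" by (rule qmatroid_subspace[OF qm])
  have sV: "vec.subspace V" and sW: "vec.subspace W" using V W by (simp_all add: subspaces_iff)
  have VWE: "ssum V W \<in> subspaces E" by (rule ssum_in_subspaces[OF sE V W])
  have "W \<subset> ssum V W" using False subset_ssum_left[OF sW, of V] subset_ssum_right[OF sV, of W]
    by blast
  then have "vec.dim E \<le> vec.dim (ssum V W)"
    using subspace_dim_less[OF sW subspace_ssum[OF sV sW]] dW by linarith
  then have "ssum V W = E" using vec.subspace_dim_equal VWE sE by (auto simp: subspaces_iff)
  then show ?thesis using rank_submodular[OF qm V W] dim_ssum_Int[OF sV sW] dW rW by simp
qed

lemma reducible_if_coloop: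
  assumes d2: "vec.dim E \<ge> 2" and W: "W \<in> subspaces E" and x: "x \<in> E"
    and hyp: "ssum W (vec.span {x}) = E" and coloop: "\<rho> W \<noteq> \<rho> E"
  shows "reducible E \<rho>"
proof -
  have sE: "vec.subspace E" by (rule qmatroid_subspace[OF qm])
  have sW: "vec.subspace W" and WE: "W \<subseteq> E" using W by (simp_all add: subspaces_iff)
  have EE: "E \<in> subspaces E" using sE by (simp add: subspaces_iff)
  have xW: "x \<notin> W"
  proof
    assume "x \<in> W"
    then have "E \<subseteq> W" using ssum_span_singleton_subset[OF sW order_refl] hyp by blast
    then show False using coloop WE by (metis subset_antisym)
  qed
  have D: "internal_dsum E W (vec.span {x})"
    using internal_dsum_span_singleton[OF sW xW] hyp by simp
  have dE: "vec.dim E = vec.dim W + 1" using dim_ssum_span_singleton[OF sW, of x] hyp xW by simp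
  have rE: "\<rho> E = \<rho> W + 1"
    using rank_increase_le_dim_increase[OF qm W EE WE] rank_mono[OF qm W EE WE] dE coloop
    by linarith
  have nonzero: "W \<noteq> {0}" "vec.span {x} \<noteq> {0}"
    using dE d2 xW vec.subspace_0[OF sW] vec.span_base[of x "{x}"] by (auto simp: vec.dim_singleton)
  have "is_dsum E \<rho> W \<rho> (vec.span {x}) \<rho>"
  proof (rule is_dsumI[OF D])
    fix V assume V: "V \<in> subspaces E"
    have X: "V \<inter> W \<in> subspaces V" "V \<inter> W \<in> subspaces W"
      using V W by (auto simp: subspaces_iff vec.subspace_inter)
    have "\<rho> (proj1 W (vec.span {x}) ` (V \<inter> W)) = \<rho> (V \<inter> W)"
      "\<rho> (proj2 W (vec.span {x}) ` (V \<inter> W)) = 0"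
      using proj_images_left[OF D X(2)] rank_zero[OF qm] by simp_all
    then show "\<exists>X \<in> subspaces V. \<rho> (proj1 W (vec.span {x}) ` X)
        + \<rho> (proj2 W (vec.span {x}) ` X) + vec.dim V \<le> \<rho> V + vec.dim X"
      using rank_Int_hyperplane_le[OF W dE rE V] by (intro bexI[OF _ X(1)]) simp
  qed
  then show ?thesis unfolding reducible_def using nonzero by blast
qed

lemma reducible_if_not_full:
  assumes d2: "vec.dim E \<ge> 2" and nf: "\<not> full E \<rho>"
  shows "reducible E \<rho>"
proof (cases "qclosure E \<rho> {0} = {0}")
  case False
  then obtain u where "u \<in> E" "u \<noteq> 0" "\<rho> (vec.span {u}) = 0"
    using qclosure_zero_eq_zero_iff[OF qm] by blast
  then show ?thesis by (rule reducible_if_loop[OF d2])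
next
  case True
  then obtain x where x: "x \<in> E" "x \<notin> cyc \<rho> E" using nf unfolding full_def cyc_def by blast
  then obtain W where "W \<in> subspaces E" "ssum W (vec.span {x}) = E" "\<rho> W \<noteq> \<rho> E"
    unfolding cyc_def by blast
  then show ?thesis using reducible_if_coloop[OF d2 _ x(1)] by blast
qed

end

section \<open>Cyclic flats of a direct sum\<close>

definition cyclic_flat_decomposition :: "('a::{field,finite}, 'n::finite) vsp \<Rightarrow> (('a, 'n) vsp \<Rightarrow> nat)
     \<Rightarrow> ('a, 'n) vsp \<Rightarrow> ('a, 'n) vsp \<Rightarrow> bool" where
  "cyclic_flat_decomposition E \<rho> Z1 Z2 \<longleftrightarrow>
     Z1 \<in> cyclic_flats E \<rho> \<and> Z2 \<in> cyclic_flats E \<rho> \<and> Z1 \<noteq> {0} \<and> Z2 \<noteq> {0} \<and>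
     ssum Z1 Z2 = E \<and> Z1 \<inter> Z2 = {0} \<and> \<rho> Z1 + \<rho> Z2 = \<rho> E \<and>
     {ssum Y1 Y2 | Y1 Y2. Y1 \<in> {Z \<in> cyclic_flats E \<rho>. Z \<subseteq> Z1} \<and> Y2 \<in> {Z \<in> cyclic_flats E \<rho>. Z \<subseteq> Z2}}
       = cyclic_flats E \<rho>"

lemma cyclic_flat_decompositionD:
  assumes "cyclic_flat_decomposition E \<rho> Z1 Z2"
  shows "Z1 \<in> cyclic_flats E \<rho>" "Z2 \<in> cyclic_flats E \<rho>" "Z1 \<noteq> {0}" "Z2 \<noteq> {0}"
    "ssum Z1 Z2 = E" "Z1 \<inter> Z2 = {0}" "\<rho> Z1 + \<rho> Z2 = \<rho> E"
    "{ssum Y1 Y2 | Y1 Y2. Y1 \<in> {Z \<in> cyclic_flats E \<rho>. Z \<subseteq> Z1} \<and> Y2 \<in> {Z \<in> cyclic_flats E \<rho>. Z \<subseteq> Z2}}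
       = cyclic_flats E \<rho>"
  using assms unfolding cyclic_flat_decomposition_def by blast+

context
  fixes E :: "('a::{field,finite} ^ 'n::finite) set" and \<rho> :: "('a ^ 'n) set \<Rightarrow> nat"
  assumes qm: "qmatroid E \<rho>"
begin

text \<open>For cyclic \<open>Z\<close> the minimum in the rank formula of the direct sum is attained only
  at \<open>Z\<close> itself, so \<open>\<rho> Z = \<rho> (proj1 Z) + \<rho> (proj2 Z)\<close>; flatness then absorbs
  \<open>proj1 Z + proj2 Z\<close>.\<close>

lemma cyclic_flat_eq_ssum_Int:
  assumes ds: "is_dsum E \<rho> E1 \<rho>1 E2 \<rho>2" and Zc: "Z \<in> cyclic_flats E \<rho>"
  shows "Z = ssum (Z \<inter> E1) (Z \<inter> E2)"
proof -
  have D: "internal_dsum E E1 E2" using ds by (simp add: is_dsum_def)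
  have sE: "vec.subspace E" by (rule qmatroid_subspace[OF qm])
  have ZE: "Z \<in> subspaces E" and sZ: "vec.subspace Z" "Z \<subseteq> E"
    using cyclic_flat_in_subspaces[OF Zc] by (simp_all add: subspaces_iff)
  have fl: "flat E \<rho> Z" and cy: "cyclic \<rho> Z" using Zc by (simp_all add: cyclic_flats_def)
  define P1 P2 where "P1 = proj1 E1 E2 ` Z" and "P2 = proj2 E1 E2 ` Z"
  have PE: "P1 \<in> subspaces E" "P2 \<in> subspaces E"
    unfolding P1_def P2_def using proj_image_in_subspaces_ambient[OF D ZE] by auto
  obtain X where X: "X \<in> subspaces Z"
    "\<rho> Z + vec.dim X = \<rho> (proj1 E1 E2 ` X) + \<rho> (proj2 E1 E2 ` X) + vec.dim Z"
    by (rule is_dsum_rank_attained_self[OF ds ZE])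
  have XE: "X \<in> subspaces E" using X(1) ZE by (rule subspaces_trans)
  have "X = Z"
  proof (rule ccontr)
    assume "X \<noteq> Z"
    then have "\<rho> Z + vec.dim X + 1 \<le> \<rho> X + vec.dim Z"
      using cyclic_rank_drop[OF qm ZE cy] X(1) by (auto simp: subspaces_iff)
    moreover have "X \<in> subspaces X" using X(1) by (simp add: subspaces_iff)
    then have "\<rho> X + vec.dim X \<le> \<rho> (proj1 E1 E2 ` X) + \<rho> (proj2 E1 E2 ` X) + vec.dim X"
      by (rule rank_le_proj_ranks[OF qm D XE])
    ultimately show False using X(2) by linarith
  qed
  then have "\<rho> (ssum P1 P2) \<le> \<rho> Z"
    using X(2) rank_ssum_le[OF qm PE] unfolding P1_def P2_def by simp
  moreover have ZP: "Z \<subseteq> ssum P1 P2" unfolding P1_def P2_def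
    using subset_ssum_proj_images[OF D sZ(2)] .
  ultimately have "ssum P1 P2 \<subseteq> Z"
    using flat_rank_le_imp_subset[OF qm fl ssum_in_subspaces[OF sE PE]] by blast
  moreover have sP: "vec.subspace P1" "vec.subspace P2" "P1 \<subseteq> E1" "P2 \<subseteq> E2"
    using proj_image_in_subspaces[OF D ZE] unfolding P1_def P2_def subspaces_iff by auto
  ultimately have "P1 \<subseteq> Z \<inter> E1" "P2 \<subseteq> Z \<inter> E2"
    using subset_ssum_left[OF sP(2), of P1] subset_ssum_right[OF sP(1), of P2] by blast+
  then have "Z \<subseteq> ssum (Z \<inter> E1) (Z \<inter> E2)" using ZP ssum_mono by blast
  moreover have "ssum (Z \<inter> E1) (Z \<inter> E2) \<subseteq> Z" using ssum_least[OF sZ(1)] by blast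
  ultimately show ?thesis by blast
qed

lemma rank_less_ssum_span_singleton_left:
  assumes ds: "is_dsum E \<rho> E1 \<rho>1 E2 \<rho>2" and fu: "full E \<rho>" and Y1: "Y1 \<in> subspaces E1"
    and x: "x \<in> E" "x \<notin> Y1" "proj1 E1 E2 x \<in> Y1"
  shows "\<rho> Y1 < \<rho> (ssum Y1 (vec.span {x}))"
proof -
  have D: "internal_dsum E E1 E2" using ds by (simp add: is_dsum_def)
  have sE: "vec.subspace E" by (rule qmatroid_subspace[OF qm])
  have sY: "vec.subspace Y1" using Y1 by (simp add: subspaces_iff)
  have Y1E: "Y1 \<in> subspaces E" using Y1 internal_dsum_in_subspaces(2)[OF D]
    by (rule subspaces_trans)
  let ?A = "ssum Y1 (vec.span {x})"
  have sA: "vec.subspace ?A" using subspace_ssum[OF sY vec.subspace_span] .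
  have AE: "?A \<in> subspaces E"
    using ssum_in_subspaces[OF sE Y1E span_singleton_in_subspaces[OF sE x(1)]] .
  have Y1A: "Y1 \<subseteq> ?A" and xA: "x \<in> ?A"
    using subset_ssum_left[OF vec.subspace_span] mem_ssum_span_singleton[OF sY] by auto
  define b where "b = proj2 E1 E2 x"
  have dec: "proj1 E1 E2 x + b = x" and bE2: "b \<in> E2"
    using proj_decomp[OF D x(1)] unfolding b_def by auto
  have b: "b \<noteq> 0" "b = x - proj1 E1 E2 x" using dec x(2,3) by (auto simp: algebra_simps)
  have bE: "b \<in> E" using bE2 internal_dsum_in_subspaces(3)[OF D] by (auto simp: subspaces_iff)
  have "b \<in> ?A" using b(2) vec.subspace_diff[OF sA xA] Y1A x(3) by blast
  then have "\<rho> (ssum Y1 (vec.span {b})) \<le> \<rho> ?A"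
    using rank_mono[OF qm ssum_in_subspaces[OF sE Y1E span_singleton_in_subspaces[OF sE bE]] AE]
      ssum_span_singleton_subset[OF sA Y1A] by blast
  moreover have "vec.span {b} \<in> subspaces E2"
    using span_singleton_in_subspaces bE2 D by (auto simp: subspaces_iff internal_dsum_def)
  then have "\<rho> (ssum Y1 (vec.span {b})) = \<rho> Y1 + 1"
    using is_dsum_rank_ssum[OF qm ds Y1] full_rank_span_singleton[OF qm fu bE b(1)] by simp
  ultimately show ?thesis by linarith
qed

lemma flat_ssum_left:
  assumes ds: "is_dsum E \<rho> E1 \<rho>1 E2 \<rho>2" and fu: "full E \<rho>"
    and Y: "Y1 \<in> subspaces E1" "Y2 \<in> subspaces E2" and fl: "flat E \<rho> (ssum Y1 Y2)"
  shows "flat E \<rho> Y1"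
proof -
  have D: "internal_dsum E E1 E2" using ds by (simp add: is_dsum_def)
  have sE: "vec.subspace E" by (rule qmatroid_subspace[OF qm])
  have YE: "Y1 \<in> subspaces E" "Y2 \<in> subspaces E"
    using Y internal_dsum_in_subspaces[OF D] subspaces_trans by blast+
  have sY: "vec.subspace Y1" "vec.subspace Y2" using Y by (simp_all add: subspaces_iff)
  show ?thesis
    unfolding flat_def
  proof (intro conjI ballI YE(1))
    fix x assume x: "x \<in> E - Y1"
    let ?A = "ssum Y1 (vec.span {x})"
    have AE: "?A \<in> subspaces E"
      using ssum_in_subspaces[OF sE YE(1) span_singleton_in_subspaces[OF sE]] x by blast
    show "\<rho> Y1 < \<rho> ?A"
    proof (rule ccontr)
      assume "\<not> \<rho> Y1 < \<rho> ?A"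
      then have "\<rho> (ssum ?A Y2) \<le> \<rho> (ssum Y1 Y2)"
        using rank_ssum_le[OF qm AE YE(2)] is_dsum_rank_ssum[OF qm ds Y] by linarith
      moreover have "ssum Y1 Y2 \<subseteq> ssum ?A Y2"
        using ssum_mono[OF subset_ssum_left[OF vec.subspace_span] order_refl] .
      ultimately have "ssum ?A Y2 \<subseteq> ssum Y1 Y2"
        using flat_rank_le_imp_subset[OF qm fl ssum_in_subspaces[OF sE AE YE(2)]] by blast
      then have "x \<in> ssum Y1 Y2"
        using mem_ssum_span_singleton[OF sY(1)] subset_ssum_left[OF sY(2), of ?A] by blast
      then have "proj1 E1 E2 x \<in> Y1" using proj_images_subset[OF D _ _, of Y1 Y2 "{x}"] Y
        by (simp add: subspaces_iff)
      then show False
        using rank_less_ssum_span_singleton_left[OF ds fu Y(1)] x \<open>\<not> \<rho> Y1 < \<rho> ?A\<close> by blast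
    qed
  qed
qed

lemma cyclic_ssum_left:
  assumes ds: "is_dsum E \<rho> E1 \<rho>1 E2 \<rho>2"
    and Y: "Y1 \<in> subspaces E1" "Y2 \<in> subspaces E2" and cy: "cyclic \<rho> (ssum Y1 Y2)"
  shows "cyclic \<rho> Y1"
proof -
  have D: "internal_dsum E E1 E2" using ds by (simp add: is_dsum_def)
  have YE: "Y1 \<in> subspaces E" "Y2 \<in> subspaces E"
    using Y internal_dsum_in_subspaces[OF D] subspaces_trans by blast+
  have ZE: "ssum Y1 Y2 \<in> subspaces E" by (rule ssum_in_subspaces[OF qmatroid_subspace[OF qm] YE])
  show ?thesis
  proof (rule cyclicI[OF qm YE(1)])
    fix U assume U: "vec.subspace U" "U \<subset> Y1"
    have UE1: "U \<in> subspaces E1" using U Y(1) by (auto simp: subspaces_iff)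
    have "vec.dim U < vec.dim Y1" using subspace_dim_less[OF U(1) _ U(2)] Y(1)
      by (simp add: subspaces_iff)
    moreover have "ssum U Y2 \<subseteq> ssum Y1 Y2" using ssum_mono[of U Y1 Y2 Y2] U(2) by auto
    ultimately have "ssum U Y2 \<subset> ssum Y1 Y2"
      using dim_ssum_parts[OF D UE1 Y(2)] dim_ssum_parts[OF D Y] by auto
    then have "\<rho> (ssum Y1 Y2) + vec.dim (ssum U Y2) + 1 \<le> \<rho> (ssum U Y2) + vec.dim (ssum Y1 Y2)"
      using cyclic_rank_drop[OF qm ZE cy] subspace_ssum[OF U(1)] Y(2) by (simp add: subspaces_iff)
    then show "\<rho> Y1 + vec.dim U + 1 \<le> \<rho> U + vec.dim Y1"
      using is_dsum_rank_ssum[OF qm ds] dim_ssum_parts[OF D] UE1 Y by simp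
  qed
qed

lemma cyclic_flat_Int_parts:
  assumes ds: "is_dsum E \<rho> E1 \<rho>1 E2 \<rho>2" and fu: "full E \<rho>" and Zc: "Z \<in> cyclic_flats E \<rho>"
  shows "Z \<inter> E1 \<in> cyclic_flats E \<rho>" "Z \<inter> E2 \<in> cyclic_flats E \<rho>"
proof -
  have D: "internal_dsum E E1 E2" using ds by (simp add: is_dsum_def)
  have Y: "Z \<inter> E1 \<in> subspaces E1" "Z \<inter> E2 \<in> subspaces E2"
    using cyclic_flat_in_subspaces[OF Zc] D
    unfolding internal_dsum_def subspaces_iff by (auto intro: vec.subspace_inter)
  have fc: "flat E \<rho> (ssum (Z \<inter> E1) (Z \<inter> E2))" "cyclic \<rho> (ssum (Z \<inter> E1) (Z \<inter> E2))"
    using Zc cyclic_flat_eq_ssum_Int[OF ds Zc] unfolding cyclic_flats_def by auto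
  show "Z \<inter> E1 \<in> cyclic_flats E \<rho>"
    using flat_ssum_left[OF ds fu Y fc(1)] cyclic_ssum_left[OF ds Y fc(2)]
    unfolding cyclic_flats_def by blast
  show "Z \<inter> E2 \<in> cyclic_flats E \<rho>"
    using flat_ssum_left[OF is_dsum_commute[OF ds] fu Y(2,1)]
      cyclic_ssum_left[OF is_dsum_commute[OF ds] Y(2,1)]
      fc ssum_commute unfolding cyclic_flats_def by (metis (no_types, lifting) mem_Collect_eq)
qed

lemma rank_Int_flats_proj_images_less:
  assumes D: "internal_dsum E E1 E2" and fl: "flat E \<rho> Y1" "flat E \<rho> Y2"
    and X: "X \<in> subspaces E" "\<not> X \<subseteq> ssum Y1 Y2"
  shows "\<rho> (proj1 E1 E2 ` X \<inter> Y1) + \<rho> (proj2 E1 E2 ` X \<inter> Y2)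
           < \<rho> (proj1 E1 E2 ` X) + \<rho> (proj2 E1 E2 ` X)"
proof -
  have UE: "proj1 E1 E2 ` X \<in> subspaces E" "proj2 E1 E2 ` X \<in> subspaces E"
    using proj_image_in_subspaces_ambient[OF D X(1)] by auto
  have I: "proj1 E1 E2 ` X \<inter> Y1 \<in> subspaces E" "proj2 E1 E2 ` X \<inter> Y2 \<in> subspaces E"
    using Int_in_subspaces UE fl by (auto simp: flat_def)
  have "X \<subseteq> ssum (proj1 E1 E2 ` X) (proj2 E1 E2 ` X)"
    using subset_ssum_proj_images[OF D] X(1) by (simp add: subspaces_iff)
  then have "\<not> proj1 E1 E2 ` X \<subseteq> Y1 \<or> \<not> proj2 E1 E2 ` X \<subseteq> Y2"
    using X(2) ssum_mono[of "proj1 E1 E2 ` X" Y1 "proj2 E1 E2 ` X" Y2] by blast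
  moreover have "\<rho> (proj1 E1 E2 ` X \<inter> Y1) \<le> \<rho> (proj1 E1 E2 ` X)"
    "\<rho> (proj2 E1 E2 ` X \<inter> Y2) \<le> \<rho> (proj2 E1 E2 ` X)"
    using rank_mono[OF qm I(1) UE(1)] rank_mono[OF qm I(2) UE(2)] by auto
  ultimately show ?thesis
    using flat_rank_Int_less[OF qm fl(1) UE(1)] flat_rank_Int_less[OF qm fl(2) UE(2)] by linarith
qed

lemma flat_ssum:
  assumes ds: "is_dsum E \<rho> E1 \<rho>1 E2 \<rho>2"
    and fl: "flat E \<rho> Y1" "flat E \<rho> Y2" and Y: "Y1 \<subseteq> E1" "Y2 \<subseteq> E2"
  shows "flat E \<rho> (ssum Y1 Y2)"
proof -
  have D: "internal_dsum E E1 E2" using ds by (simp add: is_dsum_def)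
  have sE: "vec.subspace E" by (rule qmatroid_subspace[OF qm])
  have YE: "Y1 \<in> subspaces E" "Y2 \<in> subspaces E" using fl by (simp_all add: flat_def)
  have Yi: "Y1 \<in> subspaces E1" "Y2 \<in> subspaces E2" using YE Y by (simp_all add: subspaces_iff)
  define Z where "Z = ssum Y1 Y2"
  have ZE: "Z \<in> subspaces E" unfolding Z_def by (rule ssum_in_subspaces[OF sE YE])
  have sZ: "vec.subspace Z" using ZE by (simp add: subspaces_iff)
  show ?thesis
    unfolding flat_def Z_def[symmetric]
  proof (intro conjI ballI ZE)
    fix x assume x: "x \<in> E - Z"
    define V where "V = ssum Z (vec.span {x})"
    have VE: "V \<in> subspaces E"
      unfolding V_def using ssum_in_subspaces[OF sE ZE span_singleton_in_subspaces[OF sE]] x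
      by blast
    obtain X where X: "X \<in> subspaces V"
      "\<rho> V + vec.dim X = \<rho> (proj1 E1 E2 ` X) + \<rho> (proj2 E1 E2 ` X) + vec.dim V"
      by (rule is_dsum_rank_attained_self[OF ds VE])
    define U1 U2 where "U1 = proj1 E1 E2 ` X" and "U2 = proj2 E1 E2 ` X"
    have XE: "X \<in> subspaces E" using X(1) VE by (rule subspaces_trans)
    have UE: "U1 \<in> subspaces E" "U2 \<in> subspaces E"
      unfolding U1_def U2_def using proj_image_in_subspaces_ambient[OF D XE] by auto
    have I: "U1 \<inter> Y1 \<in> subspaces E" "U2 \<inter> Y2 \<in> subspaces E" using Int_in_subspaces UE YE by blast+
    have "vec.dim X \<le> vec.dim (X \<inter> Z) + 1"
      using dim_le_dim_Int_add_one sZ X(1) unfolding V_def subspaces_iff by blast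
    have "\<rho> (U1 \<inter> Y1) + \<rho> (U2 \<inter> Y2) + vec.dim X \<le> \<rho> U1 + \<rho> U2 + vec.dim (X \<inter> Z)"
    proof (cases "X \<subseteq> Z")
      case True
      then show ?thesis using rank_mono[OF qm I(1) UE(1)] rank_mono[OF qm I(2) UE(2)]
        by (simp add: Int_absorb2)
    next
      case False
      then show ?thesis
        using rank_Int_flats_proj_images_less[OF D fl XE] \<open>vec.dim X \<le> vec.dim (X \<inter> Z) + 1\<close>
        unfolding U1_def U2_def Z_def by linarith
    qed
    then show "\<rho> Z < \<rho> V"
      using X(2) dim_Int_ssum_le_dim_proj_images[OF D Yi XE] is_dsum_rank_ssum[OF qm ds Yi]
        dim_ssum_parts[OF D Yi] dim_ssum_span_singleton[OF sZ, of x] x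
        rank_increase_le_dim_increase[OF qm I(1) YE(1)]
        rank_increase_le_dim_increase[OF qm I(2) YE(2)]
      unfolding U1_def U2_def V_def Z_def by fastforce
  qed
qed

lemma cyclic_parts_rank_drop:
  assumes D: "internal_dsum E E1 E2"
    and Y1: "Y1 \<in> subspaces E" "cyclic \<rho> Y1" "Y1 \<subseteq> E1"
    and Y2: "Y2 \<in> subspaces E" "cyclic \<rho> Y2" "Y2 \<subseteq> E2"
    and X: "X \<in> subspaces E" "X \<subset> ssum Y1 Y2"
  shows "\<rho> Y1 + \<rho> Y2 + vec.dim X + 1
           \<le> \<rho> (proj1 E1 E2 ` X) + \<rho> (proj2 E1 E2 ` X) + vec.dim Y1 + vec.dim Y2"
proof -
  define U1 U2 where "U1 = proj1 E1 E2 ` X" and "U2 = proj2 E1 E2 ` X"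
  have UE: "U1 \<in> subspaces E" "U2 \<in> subspaces E"
    unfolding U1_def U2_def using proj_image_in_subspaces_ambient[OF D X(1)] by auto
  have sU: "vec.subspace U1" "vec.subspace U2" and sX: "vec.subspace X"
    using UE X(1) by (simp_all add: subspaces_iff)
  have UY: "U1 \<subseteq> Y1" "U2 \<subseteq> Y2"
    unfolding U1_def U2_def using proj_images_subset[OF D Y1(3) Y2(3)] X(2) by blast+
  have c: "\<rho> Y1 + vec.dim U1 \<le> \<rho> U1 + vec.dim Y1" "\<rho> Y2 + vec.dim U2 \<le> \<rho> U2 + vec.dim Y2"
    using rank_increase_le_dim_increase[OF qm UE(1) Y1(1) UY(1)]
      rank_increase_le_dim_increase[OF qm UE(2) Y2(1) UY(2)] by auto
  have dP: "vec.dim X \<le> vec.dim U1 + vec.dim U2"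
    unfolding U1_def U2_def by (rule dim_le_dim_proj_images[OF D X(1)])
  have "\<rho> Y1 + \<rho> Y2 + vec.dim X + 1 \<le> \<rho> U1 + \<rho> U2 + vec.dim Y1 + vec.dim Y2"
  proof (cases "vec.dim X < vec.dim U1 + vec.dim U2")
    case True
    then show ?thesis using c by linarith
  next
    case False
    then have deq: "vec.dim X = vec.dim U1 + vec.dim U2" using dP by linarith
    have "X \<subseteq> ssum U1 U2"
      unfolding U1_def U2_def using subset_ssum_proj_images[OF D] X(1) by (simp add: subspaces_iff)
    then have "X = ssum U1 U2"
      using vec.subspace_dim_equal[OF sX subspace_ssum[OF sU]] dim_ssum_le[OF sU] deq by linarith
    then have "U1 \<noteq> Y1 \<or> U2 \<noteq> Y2" using X(2) by blast
    then have "\<rho> Y1 + \<rho> Y2 + vec.dim U1 + vec.dim U2 + 1 \<le> \<rho> U1 + \<rho> U2 + vec.dim Y1 + vec.dim Y2"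
      using cyclic_rank_drop[OF qm Y1(1,2) sU(1)] cyclic_rank_drop[OF qm Y2(1,2) sU(2)] c UY
      by fastforce
    then show ?thesis using deq by linarith
  qed
  then show ?thesis unfolding U1_def U2_def .
qed

lemma cyclic_ssum:
  assumes ds: "is_dsum E \<rho> E1 \<rho>1 E2 \<rho>2"
    and Y1: "Y1 \<in> subspaces E" "cyclic \<rho> Y1" "Y1 \<subseteq> E1"
    and Y2: "Y2 \<in> subspaces E" "cyclic \<rho> Y2" "Y2 \<subseteq> E2"
  shows "cyclic \<rho> (ssum Y1 Y2)"
proof -
  have D: "internal_dsum E E1 E2" using ds by (simp add: is_dsum_def)
  have Yi: "Y1 \<in> subspaces E1" "Y2 \<in> subspaces E2" using Y1 Y2 by (simp_all add: subspaces_iff)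
  have ZE: "ssum Y1 Y2 \<in> subspaces E"
    by (rule ssum_in_subspaces[OF qmatroid_subspace[OF qm] Y1(1) Y2(1)])
  show ?thesis
  proof (rule cyclicI[OF qm ZE])
    fix U assume U: "vec.subspace U" "U \<subset> ssum Y1 Y2"
    have UE: "U \<in> subspaces E" using U ZE by (auto simp: subspaces_iff)
    obtain X where X: "X \<in> subspaces U"
      "\<rho> U + vec.dim X = \<rho> (proj1 E1 E2 ` X) + \<rho> (proj2 E1 E2 ` X) + vec.dim U"
      by (rule is_dsum_rank_attained_self[OF ds UE])
    have "X \<in> subspaces E" "X \<subset> ssum Y1 Y2" using X(1) UE U(2) by (auto simp: subspaces_iff)
    then show "\<rho> (ssum Y1 Y2) + vec.dim U + 1 \<le> \<rho> U + vec.dim (ssum Y1 Y2)"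
      using cyclic_parts_rank_drop[OF D Y1 Y2] X(2)
        is_dsum_rank_ssum[OF qm ds Yi] dim_ssum_parts[OF D Yi] by fastforce
  qed
qed

lemma is_dsum_cyclic_flat_decomposition:
  assumes ds: "is_dsum E \<rho> E1 \<rho>1 E2 \<rho>2" and nonzero: "E1 \<noteq> {0}" "E2 \<noteq> {0}" and fu: "full E \<rho>"
  shows "cyclic_flat_decomposition E \<rho> E1 E2"
proof -
  have D: "internal_dsum E E1 E2" using ds by (simp add: is_dsum_def)
  have Ec: "E \<in> cyclic_flats E \<rho>"
    using qmatroid_subspace[OF qm] fu unfolding cyclic_flats_def flat_def cyclic_def full_def
    by (simp add: subspaces_iff)
  have "E \<inter> E1 = E1" "E \<inter> E2 = E2" using internal_dsum_in_subspaces[OF D]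
    by (auto simp: subspaces_iff)
  then have Ei: "E1 \<in> cyclic_flats E \<rho>" "E2 \<in> cyclic_flats E \<rho>"
    using cyclic_flat_Int_parts[OF ds fu Ec] by simp_all
  have "\<rho> E1 + \<rho> E2 = \<rho> E"
    using is_dsum_rank_ssum[OF qm ds] D by (auto simp: internal_dsum_def subspaces_iff)
  moreover have "ssum Y1 Y2 \<in> cyclic_flats E \<rho>"
    if "Y1 \<in> cyclic_flats E \<rho>" "Y1 \<subseteq> E1" "Y2 \<in> cyclic_flats E \<rho>" "Y2 \<subseteq> E2" for Y1 Y2
    using that flat_ssum[OF ds] cyclic_ssum[OF ds] cyclic_flat_in_subspaces
    unfolding cyclic_flats_def by (metis (mono_tags, lifting) mem_Collect_eq)
  moreover have "Z \<in> {ssum Y1 Y2 | Y1 Y2. Y1 \<in> {Z \<in> cyclic_flats E \<rho>. Z \<subseteq> E1} \<and>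
      Y2 \<in> {Z \<in> cyclic_flats E \<rho>. Z \<subseteq> E2}}" if "Z \<in> cyclic_flats E \<rho>" for Z
    using cyclic_flat_eq_ssum_Int[OF ds that] cyclic_flat_Int_parts[OF ds fu that] by blast
  ultimately show ?thesis
    using Ei D nonzero unfolding cyclic_flat_decomposition_def internal_dsum_def by blast
qed

lemma rank_ssum_ge_of_rank_split:
  assumes Z: "Z1 \<in> subspaces E" "Z2 \<in> subspaces E"
    and e: "ssum Z1 Z2 = E" and r: "\<rho> Z1 + \<rho> Z2 = \<rho> E"
    and Y: "Y1 \<in> subspaces Z1" "Y2 \<in> subspaces Z2"
  shows "\<rho> Y1 + \<rho> Y2 \<le> \<rho> (ssum Y1 Y2)"
proof -
  have YE: "Y1 \<in> subspaces E" "Y2 \<in> subspaces E" using subspaces_trans Y Z by blast+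
  have YZ: "Y1 \<subseteq> Z1" "Y2 \<subseteq> Z2" using Y by (simp_all add: subspaces_iff)
  have "\<rho> E + \<rho> Y1 \<le> \<rho> Z1 + \<rho> (ssum Y1 Z2)"
    using rank_ssum_diminishing_returns[OF qm YE(1) Z YZ(1)] e by simp
  moreover have "\<rho> (ssum Z2 Y1) + \<rho> Y2 \<le> \<rho> Z2 + \<rho> (ssum Y2 Y1)"
    using rank_ssum_diminishing_returns[OF qm YE(2) Z(2) YE(1) YZ(2)] .
  ultimately show ?thesis using r by (simp add: ssum_commute)
qed

lemma cyclic_flat_decomposition_is_dsum:
  assumes dec: "cyclic_flat_decomposition E \<rho> Z1 Z2"
  shows "is_dsum E \<rho> Z1 \<rho> Z2 \<rho>"
proof -
  have ZE: "Z1 \<in> subspaces E" "Z2 \<in> subspaces E"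
    using cyclic_flat_decompositionD(1,2)[OF dec] by (simp_all add: cyclic_flat_in_subspaces)
  have D: "internal_dsum E Z1 Z2"
    using cyclic_flat_decompositionD(5,6)[OF dec] ZE unfolding internal_dsum_def subspaces_iff
    by blast
  show ?thesis
  proof (rule is_dsumI[OF qm D])
    fix V assume V: "V \<in> subspaces E"
    obtain Z where Zc: "Z \<in> cyclic_flats E \<rho>" and Zr: "\<rho> Z + vec.dim (ssum V Z) \<le> \<rho> V + vec.dim Z"
      by (rule exists_cyclic_flat_rank_le[OF qm V])
    then obtain Y1 Y2 where Y: "Z = ssum Y1 Y2" "Y1 \<in> cyclic_flats E \<rho>" "Y1 \<subseteq> Z1"
        "Y2 \<in> cyclic_flats E \<rho>" "Y2 \<subseteq> Z2"
      using cyclic_flat_decompositionD(8)[OF dec] by blast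
    have YE: "Y1 \<in> subspaces E" "Y2 \<in> subspaces E" using cyclic_flat_in_subspaces Y by blast+
    have sV: "vec.subspace V" and sZ: "vec.subspace Z"
      using V cyclic_flat_in_subspaces[OF Zc] by (simp_all add: subspaces_iff)
    define X where "X = V \<inter> Z"
    have XV: "X \<in> subspaces V" unfolding X_def using sV sZ
      by (auto simp: subspaces_iff vec.subspace_inter)
    have XE: "X \<in> subspaces E" using XV V by (rule subspaces_trans)
    have P: "proj1 Z1 Z2 ` X \<subseteq> Y1" "proj2 Z1 Z2 ` X \<subseteq> Y2"
      using proj_images_subset[OF D Y(3,5)] Y(1) unfolding X_def by blast+
    have PE: "proj1 Z1 Z2 ` X \<in> subspaces E" "proj2 Z1 Z2 ` X \<in> subspaces E"
      using proj_image_in_subspaces_ambient[OF D XE] by auto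
    have "\<rho> Y1 + \<rho> Y2 \<le> \<rho> Z"
      using rank_ssum_ge_of_rank_split[OF ZE cyclic_flat_decompositionD(5,7)[OF dec]] YE Y
      by (simp add: subspaces_iff)
    then have "\<rho> (proj1 Z1 Z2 ` X) + \<rho> (proj2 Z1 Z2 ` X) + vec.dim V \<le> \<rho> V + vec.dim X"
      using rank_mono[OF qm PE(1) YE(1) P(1)] rank_mono[OF qm PE(2) YE(2) P(2)]
        dim_ssum_Int[OF sV sZ] Zr unfolding X_def by linarith
    then show "\<exists>X \<in> subspaces V.
        \<rho> (proj1 Z1 Z2 ` X) + \<rho> (proj2 Z1 Z2 ` X) + vec.dim V \<le> \<rho> V + vec.dim X"
      using XV by blast
  qed
qed

lemma reducible_iff_not_full_or_cyclic_flat_decomposition: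
  assumes d2: "vec.dim E \<ge> 2"
  shows "reducible E \<rho> \<longleftrightarrow> \<not> full E \<rho> \<or> (\<exists>Z1 Z2. cyclic_flat_decomposition E \<rho> Z1 Z2)"
proof
  assume "reducible E \<rho>"
  then obtain E1 E2 \<rho>1 \<rho>2 where "E1 \<noteq> {0}" "E2 \<noteq> {0}" "is_dsum E \<rho> E1 \<rho>1 E2 \<rho>2"
    unfolding reducible_def by blast
  then show "\<not> full E \<rho> \<or> (\<exists>Z1 Z2. cyclic_flat_decomposition E \<rho> Z1 Z2)"
    using is_dsum_cyclic_flat_decomposition by blast
next
  assume "\<not> full E \<rho> \<or> (\<exists>Z1 Z2. cyclic_flat_decomposition E \<rho> Z1 Z2)"
  then show "reducible E \<rho>"
  proof
    assume "\<not> full E \<rho>"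
    then show ?thesis by (rule reducible_if_not_full[OF qm d2])
  next
    assume "\<exists>Z1 Z2. cyclic_flat_decomposition E \<rho> Z1 Z2"
    then obtain Z1 Z2 where dec: "cyclic_flat_decomposition E \<rho> Z1 Z2" by blast
    then show ?thesis
      using cyclic_flat_decomposition_is_dsum[OF dec] cyclic_flat_decompositionD(3,4)[OF dec]
      unfolding reducible_def by blast
  qed
qed

end

theorem theorem7p13:
  fixes E :: "(('a::{field,finite}) ^ ('n::finite)) set"
    and \<rho> :: "('a ^ 'n) set \<Rightarrow> nat"
  assumes "qmatroid E \<rho>"
    and "vec.dim E \<ge> 2"
  shows "irreducible_qm E \<rho> \<longleftrightarrow>
    (full E \<rho> \<and>
     \<not> (\<exists>Z1 Z2. Z1 \<in> cyclic_flats E \<rho> \<and> Z2 \<in> cyclic_flats E \<rho> \<and>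
            Z1 \<noteq> {0} \<and> Z2 \<noteq> {0} \<and>
            ssum Z1 Z2 = E \<and> Z1 \<inter> Z2 = {0} \<and>
            \<rho> Z1 + \<rho> Z2 = \<rho> E \<and>
            {ssum Y1 Y2 | Y1 Y2. Y1 \<in> {Z \<in> cyclic_flats E \<rho>. Z \<subseteq> Z1} \<and>
                                Y2 \<in> {Z \<in> cyclic_flats E \<rho>. Z \<subseteq> Z2}}
              = cyclic_flats E \<rho>))"
  using reducible_iff_not_full_or_cyclic_flat_decomposition[OF assms]
  unfolding irreducible_qm_def cyclic_flat_decomposition_def by (simp only: de_Morgan_disj not_not)

end
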